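(* Let $\chi\in\mathcal{S}(\mathbb{R}^n)$ with $\|\chi\|_{L^2}=1$. For all $\alpha,\beta\in\mathbb{R}^{2n}$ and all multi-indices $a,b\in(\mathbb{N}\cup\{0\})^{2n}$, $$|W_{|\chi_\alpha\rangle\langle\chi_\beta|}|_{a,b}\le\sum_{c\le b}\sum_{d\le a}\sum_{e\le c}\sum_{f\le d}\binom{b}{c}\binom{a}{d}\binom{c}{e}\binom{d}{f}2^{-|d|}\,|W_\chi|_{a-d,b-c}\,\big|\alpha^{\hat e+f}\beta^{\hat c-\hat e+d-f}\big|$$ and $$|W_{|\chi_\alpha\rangle\langle\chi_\beta|}|_{a,b}\le 4^{|a|+|b|}(1+|\alpha|+|\beta|)^{|a|+|b|}\,\|W_\chi\|_{a,b}.$$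
   Context: For an operator $E$ on $L^2(\mathbb{R}^n)$ with integral kernel $K_E\in L^2(\mathbb{R}^{2n})$, its Wigner transform is $W_E(x,p)=(2\pi)^{-n}\int e^{ip\cdot y}K_E(x-y/2,x+y/2)\,dy$; $W_\chi$ denotes the Wigner transform of $|\chi\rangle\langle\chi|$ (kernel $\chi(x)\overline{\chi(y)}$). For $\xi=(\xi_x,\xi_p)\in\mathbb{R}^{2n}$, $(D_\xi\phi)(y)=e^{i(y-\xi_x/2)\cdot\xi_p}\phi(y-\xi_x)$; $\chi_\alpha:=D_\alpha\chi$, and $|\chi_\alpha\rangle\langle\chi_\beta|$ is the rank-one operator with kernel $\chi_\alpha(x)\overline{\chi_\beta(y)}$. For $F:\mathbb{R}^{2n}\to\mathbb{C}$, $|F|_{a,b}:=\sup_\gamma|\gamma^a\partial_\gamma^bF(\gamma)|$ and $\|F\|_{a,b}:=\sum_{a'\le a}\sum_{b'\le b}|F|_{a',b'}$. Multi-index conventions: $\alpha^a=\prod_i\alpha_i^{a_i}$, $|a|=\sum_ia_i$, $a!=\prod_ia_i!$, $\binom{a}{b}=a!/((a-b)!b!)$, $b\le c$ means $b_i\le c_i$ for all $i$; for $a=(a_x,a_p)$ with $a_x,a_p\in(\mathbb{N}\cup\{0\})^n$, $\hat a:=(a_p,a_x)$. $|\alpha|$ is the Euclidean norm. *)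

theory Defs
  imports "HOL-Analysis.Analysis"
begin

definition dderiv :: "'a::real_normed_vector \<Rightarrow> ('a \<Rightarrow> complex) \<Rightarrow> 'a \<Rightarrow> complex" where
  "dderiv v F g = vector_derivative (\<lambda>t::real. F (g + t *\<^sub>R v)) (at 0)"

definition iter_dderiv :: "'a::real_normed_vector list \<Rightarrow> ('a \<Rightarrow> complex) \<Rightarrow> 'a \<Rightarrow> complex" where
  "iter_dderiv vs F = foldr dderiv vs F"

definition idx_list :: "'n::finite list" where
  "idx_list = (SOME xs. distinct xs \<and> set xs = UNIV)"

definition schwartz :: "(real^'n \<Rightarrow> complex) \<Rightarrow> bool" where
  "schwartz f \<longleftrightarrow>
     (\<forall>vs x. iter_dderiv vs f differentiable (at x)) \<and>
     (\<forall>vs (a::'n \<Rightarrow> nat). bounded (range (\<lambda>x. (\<Prod>i\<in>UNIV. x $ i ^ a i) *\<^sub>R iter_dderiv vs f x)))"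

type_synonym 'n phase = "(real^'n) \<times> (real^'n)"
type_synonym 'n midx = "('n \<Rightarrow> nat) \<times> ('n \<Rightarrow> nat)"

definition mi_le :: "'n midx \<Rightarrow> 'n midx \<Rightarrow> bool" where
  "mi_le b c \<longleftrightarrow> (\<forall>i. fst b i \<le> fst c i) \<and> (\<forall>i. snd b i \<le> snd c i)"

definition mi_add :: "'n midx \<Rightarrow> 'n midx \<Rightarrow> 'n midx" where
  "mi_add a b = ((\<lambda>i. fst a i + fst b i), (\<lambda>i. snd a i + snd b i))"

definition mi_sub :: "'n midx \<Rightarrow> 'n midx \<Rightarrow> 'n midx" where
  "mi_sub a b = ((\<lambda>i. fst a i - fst b i), (\<lambda>i. snd a i - snd b i))"

definition mi_hat :: "'n midx \<Rightarrow> 'n midx" where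
  "mi_hat a = (snd a, fst a)"

definition mi_abs :: "'n::finite midx \<Rightarrow> nat" where
  "mi_abs a = (\<Sum>i\<in>UNIV. fst a i) + (\<Sum>i\<in>UNIV. snd a i)"

definition mi_binom :: "'n::finite midx \<Rightarrow> 'n midx \<Rightarrow> nat" where
  "mi_binom a b = (\<Prod>i\<in>UNIV. fst a i choose fst b i) * (\<Prod>i\<in>UNIV. snd a i choose snd b i)"

definition mi_pow :: "'n::finite phase \<Rightarrow> 'n midx \<Rightarrow> real" where
  "mi_pow g a = (\<Prod>i\<in>UNIV. fst g $ i ^ fst a i) * (\<Prod>i\<in>UNIV. snd g $ i ^ snd a i)"

definition phase_dirs :: "'n::finite midx \<Rightarrow> 'n phase list" where
  "phase_dirs b =
     concat (map (\<lambda>i. replicate (fst b i) (axis i 1, 0)) idx_list) @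
     concat (map (\<lambda>i. replicate (snd b i) (0, axis i 1)) idx_list)"

definition pderiv_mi :: "'n::finite midx \<Rightarrow> ('n phase \<Rightarrow> complex) \<Rightarrow> 'n phase \<Rightarrow> complex" where
  "pderiv_mi b F = iter_dderiv (phase_dirs b) F"

definition seminorm :: "('n::finite phase \<Rightarrow> complex) \<Rightarrow> 'n midx \<Rightarrow> 'n midx \<Rightarrow> ennreal" where
  "seminorm F a b = (SUP g. ennreal (cmod (of_real (mi_pow g a) * pderiv_mi b F g)))"

definition seminorm_sum :: "('n::finite phase \<Rightarrow> complex) \<Rightarrow> 'n midx \<Rightarrow> 'n midx \<Rightarrow> ennreal" where
  "seminorm_sum F a b = (\<Sum>a'\<in>{a'. mi_le a' a}. \<Sum>b'\<in>{b'. mi_le b' b}. seminorm F a' b')"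

definition wigner :: "(real^'n \<Rightarrow> real^'n \<Rightarrow> complex) \<Rightarrow> 'n::finite phase \<Rightarrow> complex" where
  "wigner K g = complex_of_real (1 / (2 * pi) ^ CARD('n)) *
     (LINT y|lborel. exp (\<i> * complex_of_real (snd g \<bullet> y)) *
        K (fst g - (1/2) *\<^sub>R y) (fst g + (1/2) *\<^sub>R y))"

text \<open>Kernel of the rank-one operator |phi><psi|.\<close>
definition rank_one :: "(real^'n \<Rightarrow> complex) \<Rightarrow> (real^'n \<Rightarrow> complex) \<Rightarrow> real^'n \<Rightarrow> real^'n \<Rightarrow> complex" where
  "rank_one phi psi x y = phi x * cnj (psi y)"

definition Dtrans :: "'n::finite phase \<Rightarrow> (real^'n \<Rightarrow> complex) \<Rightarrow> real^'n \<Rightarrow> complex" where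
  "Dtrans xi phi y = exp (\<i> * complex_of_real ((y - (1/2) *\<^sub>R fst xi) \<bullet> snd xi)) * phi (y - fst xi)"

end

theory Submission
  imports Defs "HOL-Probability.Sinc_Integral"
begin

(*
  Translating the two factors of the rank-one operator by alpha and beta translates the Wigner
  transform by the midpoint m = (alpha + beta)/2 and multiplies it by a plane wave:
    W_{chi_alpha,chi_beta}(gamma) = exp(i (l . gamma + theta)) W_chi(gamma - m),
  with l = (alpha_p - beta_p, beta_x - alpha_x) and theta = (alpha_x . beta_p - beta_x . alpha_p)/2.
  The Leibniz rule turns d^b of this product into sum_c (b choose c) (i l)^c d^(b-c) W_chi(gamma - m);
  expanding l^c = (alpha - beta)^(hat c) and gamma^a = ((gamma - m) + m)^a binomially gives the
  first bound, and sum_e (c choose e) = 2^|c| together with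
  |alpha^r beta^s| <= (1 + |alpha| + |beta|)^(|r|+|s|) gives the second.

  The Leibniz rule needs W_chi to be differentiable along lines to all orders.  Differentiating
  under the integral sign, every derivative of W_chi is a combination of integrals of
  exp(i p . y) y^k (d^u chi)(x - y/2) conj((d^w chi)(x + y/2)), and the Schwartz decay of chi
  dominates these integrands by prod_i (1 + y_i^2)^(-1), uniformly in x.
*)

lemma norm_remainder_le_derivative_bound:
  fixes f :: "real \<Rightarrow> 'a::real_normed_vector"
  assumes der: "\<And>s. (f has_vector_derivative f' s) (at s)"
    and bnd: "\<And>s. norm (f' s) \<le> B"
  shows "norm (f h - f 0 - h *\<^sub>R f' 0) \<le> \<bar>h\<bar> * (2 * B)"
proof -
  have "norm (f h - f 0 - (h - 0) *\<^sub>R f' 0) \<le> norm (h - 0) * (2 * B)"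
  proof (rule vector_differentiable_bound_linearization[where S=UNIV])
    show "(f has_vector_derivative f' s) (at s within UNIV)" for s using der by simp
    show "norm (f' s - f' 0) \<le> 2 * B" for s
      using norm_triangle_ineq4[of "f' s" "f' 0"] bnd[of s] bnd[of 0] by linarith
  qed auto
  then show ?thesis by simp
qed

lemma integral_dominated_convergence_at:
  fixes s :: "'c::first_countable_topology \<Rightarrow> 'a \<Rightarrow> 'b::{banach, second_countable_topology}"
  assumes "f \<in> borel_measurable M" "\<And>t. s t \<in> borel_measurable M" "integrable M w"
    and lim: "\<And>x. ((\<lambda>t. s t x) \<longlongrightarrow> f x) (at a)"
    and bound: "\<And>t x. t \<noteq> a \<Longrightarrow> norm (s t x) \<le> w x"
  shows "((\<lambda>t. \<integral>x. s t x \<partial>M) \<longlongrightarrow> (\<integral>x. f x \<partial>M)) (at a)"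
  unfolding tendsto_at_iff_sequentially
proof (intro allI impI)
  fix X :: "nat \<Rightarrow> 'c" assume X: "\<forall>i. X i \<in> UNIV - {a}" and "X \<longlonglongrightarrow> a"
  have "(\<lambda>i. \<integral>x. s (X i) x \<partial>M) \<longlonglongrightarrow> (\<integral>x. f x \<partial>M)"
  proof (rule integral_dominated_convergence[where w=w])
    show "AE x in M. (\<lambda>i. s (X i) x) \<longlonglongrightarrow> f x"
      using lim X \<open>X \<longlonglongrightarrow> a\<close> unfolding tendsto_at_iff_sequentially comp_def by auto
    show "AE x in M. norm (s (X i) x) \<le> w x" for i
      using X bound by auto
  qed (use assms in auto)
  then show "((\<lambda>t. \<integral>x. s t x \<partial>M) \<circ> X) \<longlonglongrightarrow> (\<integral>x. f x \<partial>M)" by (simp add: comp_def)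
qed

lemma has_vector_derivative_integral_at_0:
  fixes f :: "real \<Rightarrow> 'a \<Rightarrow> 'b::{banach, second_countable_topology}"
  assumes der: "\<And>s y. ((\<lambda>s. f s y) has_vector_derivative f' s y) (at s)"
    and meas: "\<And>s. f s \<in> borel_measurable M"
    and meas': "\<And>s. f' s \<in> borel_measurable M"
    and int0: "integrable M (f 0)"
    and intB: "integrable M B"
    and bnd: "\<And>s y. norm (f' s y) \<le> B y"
  shows "((\<lambda>s. \<integral>y. f s y \<partial>M) has_vector_derivative (\<integral>y. f' 0 y \<partial>M)) (at 0)"
proof -
  define r where "r h y = f h y - f 0 y - h *\<^sub>R f' 0 y" for h y
  have r_bnd: "norm (r h y) \<le> \<bar>h\<bar> * (2 * B y)" for h y
    unfolding r_def by (rule norm_remainder_le_derivative_bound[OF der bnd])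
  have r_meas: "r h \<in> borel_measurable M" for h
    unfolding r_def using meas meas' by measurable
  have int_r: "integrable M (r h)" for h
    by (rule Bochner_Integration.integrable_bound[where f="\<lambda>y. \<bar>h\<bar> * (2 * B y)"])
       (use intB r_meas r_bnd in \<open>auto intro!: AE_I2 order_trans[OF _ abs_ge_self]\<close>)
  have int': "integrable M (f' 0)"
    by (rule Bochner_Integration.integrable_bound[OF intB meas'])
       (use bnd in \<open>auto intro!: AE_I2 order_trans[OF _ abs_ge_self]\<close>)
  have int: "integrable M (f h)" for h
  proof -
    have "f h = (\<lambda>y. f 0 y + h *\<^sub>R f' 0 y + r h y)" by (auto simp: r_def)
    then show ?thesis using int0 int' int_r by simp
  qed
  have "((\<lambda>h. \<integral>y. norm (r h y) / \<bar>h\<bar> \<partial>M) \<longlongrightarrow> (\<integral>y. 0 \<partial>M)) (at 0)"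
  proof (rule integral_dominated_convergence_at[where w="\<lambda>y. 2 * B y"])
    show "((\<lambda>h. norm (r h y) / \<bar>h\<bar>) \<longlongrightarrow> 0) (at 0)" for y
      using der[of y 0] unfolding has_vector_derivative_def has_derivative_at r_def by simp
    show "norm (norm (r h y) / \<bar>h\<bar>) \<le> 2 * B y" if "h \<noteq> 0" for h y
      using that r_bnd[of h y] by (simp add: divide_simps mult.commute)
  qed (use intB r_meas in auto)
  then have quotient_lim: "((\<lambda>h. \<integral>y. norm (r h y) / \<bar>h\<bar> \<partial>M) \<longlongrightarrow> 0) (at 0)" by simp
  have remainder_le: "norm ((\<integral>y. f h y \<partial>M) - (\<integral>y. f 0 y \<partial>M) - h *\<^sub>R (\<integral>y. f' 0 y \<partial>M)) / \<bar>h\<bar>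
      \<le> (\<integral>y. norm (r h y) / \<bar>h\<bar> \<partial>M)" for h
  proof -
    have "(\<integral>y. f h y \<partial>M) - (\<integral>y. f 0 y \<partial>M) - h *\<^sub>R (\<integral>y. f' 0 y \<partial>M) = (\<integral>y. r h y \<partial>M)"
      using int int' by (simp add: r_def)
    moreover have "norm (\<integral>y. r h y \<partial>M) \<le> (\<integral>y. norm (r h y) \<partial>M)"
      by (rule integral_norm_bound)
    ultimately show ?thesis by (simp add: divide_right_mono)
  qed
  have "((\<lambda>h. norm ((\<integral>y. f (0 + h) y \<partial>M) - (\<integral>y. f 0 y \<partial>M) - h *\<^sub>R (\<integral>y. f' 0 y \<partial>M)) / norm h)
      \<longlongrightarrow> 0) (at 0)"
    by (rule tendsto_sandwich[OF _ _ tendsto_const quotient_lim]) (use remainder_le in auto)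
  then show ?thesis unfolding has_vector_derivative_def has_derivative_at
    by (auto intro: bounded_linear_scaleR_left)
qed

lemma has_vector_derivative_line:
  assumes "(F has_derivative F') (at (z + s *\<^sub>R w))"
  shows "((\<lambda>t. F (z + t *\<^sub>R w)) has_vector_derivative F' w) (at s)"
proof -
  have "((\<lambda>t. z + t *\<^sub>R w) has_derivative (\<lambda>h. h *\<^sub>R w)) (at s)"
    by (auto intro!: derivative_eq_intros)
  from diff_chain_at[OF this assms]
  have "((\<lambda>t. F (z + t *\<^sub>R w)) has_derivative (\<lambda>h. F' (h *\<^sub>R w))) (at s)"
    by (simp add: comp_def)
  moreover have "(\<lambda>h. F' (h *\<^sub>R w)) = (\<lambda>h. h *\<^sub>R F' w)"
    using has_derivative_linear[OF assms] by (simp add: linear_scale)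
  ultimately show ?thesis unfolding has_vector_derivative_def by simp
qed

lemma has_vector_derivative_line_dderiv:
  assumes "F differentiable (at (z + s *\<^sub>R w))"
  shows "((\<lambda>t. F (z + t *\<^sub>R w)) has_vector_derivative dderiv w F (z + s *\<^sub>R w)) (at s)"
proof -
  obtain D where D: "(F has_derivative D) (at (z + s *\<^sub>R w))"
    using assms differentiable_def by blast
  have "((\<lambda>t. F ((z + s *\<^sub>R w) + t *\<^sub>R w)) has_vector_derivative D w) (at 0)"
    by (rule has_vector_derivative_line) (use D in simp)
  then have "dderiv w F (z + s *\<^sub>R w) = D w"
    unfolding dderiv_def by (rule vector_derivative_at)
  with has_vector_derivative_line[OF D] show ?thesis by simp
qed

lemma iter_dderiv_Nil [simp]: "iter_dderiv [] F = F"
  by (simp add: iter_dderiv_def)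

lemma iter_dderiv_Cons: "iter_dderiv (v # vs) F = dderiv v (iter_dderiv vs F)"
  by (simp add: iter_dderiv_def)

lemma iter_dderiv_append: "iter_dderiv (xs @ ys) F = iter_dderiv xs (iter_dderiv ys F)"
  by (simp add: iter_dderiv_def)

lemma iter_dderiv_shift: "iter_dderiv ws (\<lambda>g. F (g - m)) = (\<lambda>g. iter_dderiv ws F (g - m))"
  by (induction ws) (simp_all add: iter_dderiv_Cons dderiv_def algebra_simps)

text \<open>Weaker than \<open>C\<^sup>\<infinity>\<close>, but exactly what the Leibniz rule for \<^const>\<open>pderiv_mi\<close> needs, and what
  differentiation under the integral sign yields for Wigner transforms.\<close>

definition line_smooth :: "('a::real_normed_vector \<Rightarrow> complex) \<Rightarrow> bool" where
  "line_smooth F \<longleftrightarrow> (\<forall>ws g v. (\<lambda>t. iter_dderiv ws F (g + t *\<^sub>R v)) differentiable (at 0))"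

lemma line_smooth_has_vector_derivative:
  assumes "line_smooth F"
  shows "((\<lambda>t. iter_dderiv ws F (g + t *\<^sub>R v)) has_vector_derivative iter_dderiv (v # ws) F g) (at 0)"
  using assms unfolding line_smooth_def iter_dderiv_Cons dderiv_def vector_derivative_works by simp

lemma line_smooth_iter_dderiv: "line_smooth F \<Longrightarrow> line_smooth (iter_dderiv ws F)"
  unfolding line_smooth_def iter_dderiv_append[symmetric] by blast

lemma iter_dderiv_sum:
  assumes "\<And>j. j \<in> J \<Longrightarrow> line_smooth (F j)"
  shows "iter_dderiv ws (\<lambda>g. \<Sum>j\<in>J. c j * F j g) = (\<lambda>g. \<Sum>j\<in>J. c j * iter_dderiv ws (F j) g)"
proof (induction ws)
  case (Cons v ws)
  show ?case
  proof
    fix g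
    have "((\<lambda>t. \<Sum>j\<in>J. c j * iter_dderiv ws (F j) (g + t *\<^sub>R v)) has_vector_derivative
        (\<Sum>j\<in>J. c j * iter_dderiv (v # ws) (F j) g)) (at 0)"
      by (intro has_vector_derivative_sum has_vector_derivative_mult_right
          line_smooth_has_vector_derivative assms)
    then show "iter_dderiv (v # ws) (\<lambda>g. \<Sum>j\<in>J. c j * F j g) g = (\<Sum>j\<in>J. c j * iter_dderiv (v # ws) (F j) g)"
      unfolding iter_dderiv_Cons Cons.IH dderiv_def by (rule vector_derivative_at)
  qed
qed simp

lemma line_smooth_sum:
  assumes "\<And>j. j \<in> J \<Longrightarrow> line_smooth (F j)"
  shows "line_smooth (\<lambda>g. \<Sum>j\<in>J. c j * F j g)"
  unfolding line_smooth_def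
proof (intro allI)
  fix ws g v
  have "iter_dderiv ws (\<lambda>g. \<Sum>j\<in>J. c j * F j g) = (\<lambda>g. \<Sum>j\<in>J. c j * iter_dderiv ws (F j) g)"
    by (rule iter_dderiv_sum[OF assms])
  moreover have "((\<lambda>t. \<Sum>j\<in>J. c j * iter_dderiv ws (F j) (g + t *\<^sub>R v)) has_vector_derivative
      (\<Sum>j\<in>J. c j * iter_dderiv (v # ws) (F j) g)) (at 0)"
    by (intro has_vector_derivative_sum has_vector_derivative_mult_right
        line_smooth_has_vector_derivative assms)
  ultimately show "(\<lambda>t. iter_dderiv ws (\<lambda>g. \<Sum>j\<in>J. c j * F j g) (g + t *\<^sub>R v)) differentiable at 0"
    by (simp add: differentiableI_vector)
qed

lemma line_smooth_shift: "line_smooth F \<Longrightarrow> line_smooth (\<lambda>g. F (g - m))"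
  unfolding line_smooth_def iter_dderiv_shift
proof (intro allI)
  fix ws g v
  assume "\<forall>ws g v. (\<lambda>t. iter_dderiv ws F (g + t *\<^sub>R v)) differentiable at 0"
  then have "(\<lambda>t. iter_dderiv ws F ((g - m) + t *\<^sub>R v)) differentiable at 0" by blast
  then show "(\<lambda>t. iter_dderiv ws F (g + t *\<^sub>R v - m)) differentiable at 0"
    by (simp add: algebra_simps)
qed

definition plane_wave :: "'a::real_inner \<Rightarrow> real \<Rightarrow> 'a \<Rightarrow> complex" where
  "plane_wave l c g = exp (\<i> * complex_of_real (l \<bullet> g + c))"

definition wave_rate :: "'a::real_inner \<Rightarrow> 'a \<Rightarrow> complex" where
  "wave_rate l v = \<i> * complex_of_real (l \<bullet> v)"

lemma norm_plane_wave [simp]: "cmod (plane_wave l c g) = 1"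
  unfolding plane_wave_def by simp

lemma has_vector_derivative_exp_i_line:
  "((\<lambda>s. exp (\<i> * complex_of_real (A + s * B))) has_vector_derivative
     (\<i> * complex_of_real B) * exp (\<i> * complex_of_real (A + s * B))) (at s)"
proof -
  have "((\<lambda>z. exp (\<i> * (complex_of_real A + z * complex_of_real B))) has_field_derivative
     exp (\<i> * (complex_of_real A + complex_of_real s * complex_of_real B)) * (\<i> * complex_of_real B))
     (at (complex_of_real s))"
    by (auto intro!: derivative_eq_intros)
  from has_vector_derivative_real_field[OF this] show ?thesis by (simp add: ac_simps)
qed

lemma dderiv_plane_wave_mult:
  assumes "((\<lambda>t. H (g + t *\<^sub>R v)) has_vector_derivative D) (at 0)"
  shows "dderiv v (\<lambda>g. plane_wave l c g * H g) g = plane_wave l c g * (wave_rate l v * H g + D)"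
proof -
  have e: "(\<lambda>t. plane_wave l c (g + t *\<^sub>R v)) = (\<lambda>t. exp (\<i> * complex_of_real ((l \<bullet> g + c) + t * (l \<bullet> v))))"
    unfolding plane_wave_def by (simp add: inner_add_right algebra_simps)
  have "((\<lambda>t. plane_wave l c (g + t *\<^sub>R v)) has_vector_derivative wave_rate l v * plane_wave l c g) (at 0)"
    using has_vector_derivative_exp_i_line[of "l \<bullet> g + c" "l \<bullet> v" 0]
    unfolding e by (simp add: plane_wave_def wave_rate_def)
  from has_vector_derivative_mult[OF this assms] show ?thesis
    unfolding dderiv_def by (subst vector_derivative_at) (auto simp: algebra_simps)
qed

lemma pascal_sum_step:
  fixes L :: "'a::comm_ring_1" and A :: "nat \<Rightarrow> 'a"
  shows "L * (\<Sum>j\<le>m. of_nat (m choose j) * L ^ j * A (m - j)) + (\<Sum>j\<le>m. of_nat (m choose j) * L ^ j * A (Suc (m - j)))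
       = (\<Sum>j\<le>Suc m. of_nat (Suc m choose j) * L ^ j * A (Suc m - j))"
proof -
  have r: "(\<Sum>j\<le>Suc m. of_nat (Suc m choose j) * L ^ j * A (Suc m - j))
     = A (Suc m) + (\<Sum>i\<le>m. of_nat (m choose i) * L ^ Suc i * A (m - i))
         + (\<Sum>i\<le>m. of_nat (m choose Suc i) * L ^ Suc i * A (m - i))"
    by (subst sum.atMost_Suc_shift) (simp add: sum.distrib algebra_simps)
  have b: "(\<Sum>j\<le>m. of_nat (m choose j) * L ^ j * A (Suc (m - j)))
      = A (Suc m) + (\<Sum>i\<le>m. of_nat (m choose Suc i) * L ^ Suc i * A (m - i))"
  proof (cases m)
    case (Suc m')
    have "(\<Sum>j\<le>m. of_nat (m choose j) * L ^ j * A (Suc (m - j)))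
        = A (Suc m) + (\<Sum>i\<le>m'. of_nat (m choose Suc i) * L ^ Suc i * A (m - i))"
      unfolding Suc by (subst sum.atMost_Suc_shift) (simp add: Suc_diff_le)
    also have "\<dots> = A (Suc m) + (\<Sum>i\<le>m. of_nat (m choose Suc i) * L ^ Suc i * A (m - i))"
      unfolding Suc by (simp add: binomial_eq_0)
    finally show ?thesis .
  qed simp
  show ?thesis unfolding r b by (simp add: sum_distrib_left algebra_simps)
qed

lemma iter_dderiv_replicate_plane_wave_mult:
  assumes "line_smooth H"
  shows "iter_dderiv (replicate m v) (\<lambda>g. plane_wave l c g * H g) =
    (\<lambda>g. plane_wave l c g * (\<Sum>j\<le>m. of_nat (m choose j) * wave_rate l v ^ j * iter_dderiv (replicate (m - j) v) H g))"
proof (induction m)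
  case (Suc m)
  define S where "S g = (\<Sum>j\<le>m. (of_nat (m choose j) * wave_rate l v ^ j) * iter_dderiv (replicate (m - j) v) H g)" for g
  have S_der: "((\<lambda>t. S (g + t *\<^sub>R v)) has_vector_derivative
      (\<Sum>j\<le>m. (of_nat (m choose j) * wave_rate l v ^ j) * iter_dderiv (replicate (Suc (m - j)) v) H g)) (at 0)" for g
    unfolding S_def
    by (intro has_vector_derivative_sum has_vector_derivative_mult_right
        line_smooth_has_vector_derivative[THEN has_vector_derivative_eq_rhs] assms) simp
  have "iter_dderiv (replicate (Suc m) v) (\<lambda>g. plane_wave l c g * H g) = dderiv v (\<lambda>g. plane_wave l c g * S g)"
    unfolding replicate_Suc iter_dderiv_Cons Suc.IH S_def by (simp add: mult.assoc)
  also have "\<dots> = (\<lambda>g. plane_wave l c g * (wave_rate l v * S g +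
      (\<Sum>j\<le>m. (of_nat (m choose j) * wave_rate l v ^ j) * iter_dderiv (replicate (Suc (m - j)) v) H g)))"
    by (intro ext dderiv_plane_wave_mult S_der)
  also have "\<dots> = (\<lambda>g. plane_wave l c g *
      (\<Sum>j\<le>Suc m. of_nat (Suc m choose j) * wave_rate l v ^ j * iter_dderiv (replicate (Suc m - j) v) H g))"
    using pascal_sum_step[of "wave_rate l v" m "\<lambda>r. iter_dderiv (replicate r v) H _"]
    unfolding S_def by (simp add: mult.assoc)
  finally show ?case .
qed simp

definition dir_blocks :: "('k \<Rightarrow> 'a) \<Rightarrow> 'k list \<Rightarrow> ('k \<Rightarrow> nat) \<Rightarrow> 'a list" where
  "dir_blocks dir ks n = concat (map (\<lambda>k. replicate (n k) (dir k)) ks)"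

definition sub_counts :: "'k list \<Rightarrow> ('k \<Rightarrow> nat) \<Rightarrow> ('k \<Rightarrow> nat) set" where
  "sub_counts ks n = {c. (\<forall>k. c k \<le> n k) \<and> (\<forall>k. k \<notin> set ks \<longrightarrow> c k = 0)}"

lemma dir_blocks_cong: "(\<And>k. k \<in> set ks \<Longrightarrow> n k = n' k) \<Longrightarrow> dir_blocks dir ks n = dir_blocks dir ks n'"
  unfolding dir_blocks_def by (metis (mono_tags, lifting) map_eq_conv)

lemma sum_sub_counts_Cons:
  assumes "k \<notin> set ks"
  shows "(\<Sum>c\<in>sub_counts (k # ks) n. G c) = (\<Sum>j\<le>n k. \<Sum>c\<in>sub_counts ks n. G (c(k := j)))"
proof -
  have "(\<Sum>j\<le>n k. \<Sum>c\<in>sub_counts ks n. G (c(k := j))) = (\<Sum>jc\<in>{..n k} \<times> sub_counts ks n. G ((snd jc)(k := fst jc)))"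
    by (simp add: sum.cartesian_product case_prod_beta)
  also have "\<dots> = (\<Sum>c\<in>sub_counts (k # ks) n. G c)"
  proof (rule sum.reindex_bij_witness[where i="\<lambda>c. (c k, c(k := 0))" and j="\<lambda>jc. (snd jc)(k := fst jc)"])
    fix jc assume "jc \<in> {..n k} \<times> sub_counts ks n"
    with assms show "(((snd jc)(k := fst jc)) k, ((snd jc)(k := fst jc))(k := 0)) = jc"
      and "(snd jc)(k := fst jc) \<in> sub_counts (k # ks) n"
      unfolding sub_counts_def by (cases jc; auto simp: fun_eq_iff)+
  qed (auto simp: sub_counts_def)
  finally show ?thesis ..
qed

lemma iter_dderiv_dir_blocks_plane_wave_mult:
  fixes ks :: "'k::finite list" and H :: "'a::real_inner \<Rightarrow> complex"
  assumes smooth: "line_smooth H" and "distinct ks"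
  shows "iter_dderiv (dir_blocks dir ks n) (\<lambda>g. plane_wave l \<theta> g * H g) =
    (\<lambda>g. plane_wave l \<theta> g * (\<Sum>c\<in>sub_counts ks n.
       (\<Prod>k\<in>set ks. of_nat (n k choose c k) * wave_rate l (dir k) ^ c k)
       * iter_dderiv (dir_blocks dir ks (\<lambda>k. n k - c k)) H g))"
  using \<open>distinct ks\<close>
proof (induction ks)
  case Nil
  have "sub_counts [] n = {\<lambda>_. 0}" unfolding sub_counts_def by auto
  then show ?case by (simp add: dir_blocks_def)
next
  case (Cons k ks)
  then have k: "k \<notin> set ks" and "distinct ks" by auto
  define coef where "coef c = (\<Prod>k\<in>set ks. of_nat (n k choose c k) * wave_rate l (dir k) ^ c k)" for c
  define S where "S g = (\<Sum>c\<in>sub_counts ks n. coef c * iter_dderiv (dir_blocks dir ks (\<lambda>k. n k - c k)) H g)" for g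
  have S_smooth: "line_smooth S"
    unfolding S_def by (intro line_smooth_sum line_smooth_iter_dderiv smooth)
  have iter_S: "iter_dderiv ws S = (\<lambda>g. \<Sum>c\<in>sub_counts ks n. coef c * iter_dderiv (ws @ dir_blocks dir ks (\<lambda>k. n k - c k)) H g)" for ws
    unfolding S_def iter_dderiv_append by (intro iter_dderiv_sum line_smooth_iter_dderiv smooth)
  have coef_upd: "(\<Prod>k'\<in>set (k # ks). of_nat (n k' choose (c(k := j)) k') * wave_rate l (dir k') ^ (c(k := j)) k')
      = of_nat (n k choose j) * wave_rate l (dir k) ^ j * coef c" for c j
  proof -
    have "(\<Prod>k'\<in>set ks. of_nat (n k' choose (c(k := j)) k') * wave_rate l (dir k') ^ (c(k := j)) k') = coef c"
      unfolding coef_def using k by (intro prod.cong) auto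
    then show ?thesis using k by simp
  qed
  have blocks_upd: "dir_blocks dir (k # ks) (\<lambda>k'. n k' - (c(k := j)) k')
      = replicate (n k - j) (dir k) @ dir_blocks dir ks (\<lambda>k'. n k' - c k')" for c j
  proof -
    have "dir_blocks dir ks (\<lambda>k'. n k' - (c(k := j)) k') = dir_blocks dir ks (\<lambda>k'. n k' - c k')"
      using k by (intro dir_blocks_cong) auto
    then show ?thesis by (simp add: dir_blocks_def)
  qed
  have "iter_dderiv (dir_blocks dir (k # ks) n) (\<lambda>g. plane_wave l \<theta> g * H g)
      = iter_dderiv (replicate (n k) (dir k)) (\<lambda>g. plane_wave l \<theta> g * S g)"
    by (simp add: dir_blocks_def iter_dderiv_append Cons.IH[OF \<open>distinct ks\<close>, unfolded dir_blocks_def]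
        S_def coef_def mult.assoc)
  also have "\<dots> = (\<lambda>g. plane_wave l \<theta> g * (\<Sum>j\<le>n k. of_nat (n k choose j) * wave_rate l (dir k) ^ j
      * iter_dderiv (replicate (n k - j) (dir k)) S g))"
    by (rule iter_dderiv_replicate_plane_wave_mult[OF S_smooth])
  also have "\<dots> = (\<lambda>g. plane_wave l \<theta> g * (\<Sum>c\<in>sub_counts (k # ks) n.
      (\<Prod>k\<in>set (k # ks). of_nat (n k choose c k) * wave_rate l (dir k) ^ c k)
      * iter_dderiv (dir_blocks dir (k # ks) (\<lambda>k. n k - c k)) H g))"
    unfolding sum_sub_counts_Cons[OF k] coef_upd blocks_upd iter_S
    by (simp add: sum_distrib_left mult.assoc)
  finally show ?case .
qed

lemma idx_list_distinct_UNIV: "distinct (idx_list :: 'n::finite list) \<and> set (idx_list :: 'n list) = UNIV"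
proof -
  have "\<exists>xs::'n list. distinct xs \<and> set xs = UNIV" using finite_distinct_list[of "UNIV::'n set"] by auto
  then show ?thesis unfolding idx_list_def by (rule someI_ex)
qed

lemma sum_list_map_idx_list: "sum_list (map f (idx_list :: 'n::finite list)) = sum f UNIV"
  using idx_list_distinct_UNIV[where 'n='n] sum_list_distinct_conv_sum_set[of "idx_list::'n list" f] by simp

definition phase_axis :: "'n + 'n \<Rightarrow> 'n::finite phase" where
  "phase_axis k = (case k of Inl i \<Rightarrow> (axis i 1, 0) | Inr i \<Rightarrow> (0, axis i 1))"

definition phase_keys :: "('n::finite + 'n) list" where
  "phase_keys = map Inl idx_list @ map Inr idx_list"

definition wave_rate_pow :: "'n::finite phase \<Rightarrow> 'n midx \<Rightarrow> complex" where
  "wave_rate_pow l c = (\<Prod>i\<in>UNIV. wave_rate l (axis i 1, 0) ^ fst c i) * (\<Prod>i\<in>UNIV. wave_rate l (0, axis i 1) ^ snd c i)"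

lemma phase_keys_distinct_UNIV: "distinct (phase_keys :: ('n::finite + 'n) list) \<and> set (phase_keys :: ('n + 'n) list) = UNIV"
  using idx_list_distinct_UNIV[where 'n='n] unfolding phase_keys_def
  by (auto simp: distinct_map inj_on_def UNIV_sum)

lemma dir_blocks_phase_keys:
  "dir_blocks phase_axis phase_keys (case_sum (fst b) (snd b)) = phase_dirs b"
  "dir_blocks phase_axis phase_keys (\<lambda>k. case_sum (fst b) (snd b) k - case_sum (fst c) (snd c) k)
    = phase_dirs (mi_sub b c)"
  unfolding dir_blocks_def phase_keys_def phase_dirs_def mi_sub_def phase_axis_def by (simp_all add: comp_def)

lemma prod_UNIV_Plus:
  "(\<Prod>k\<in>(UNIV :: ('n::finite + 'm::finite) set). f k) = (\<Prod>i\<in>UNIV. f (Inl i)) * (\<Prod>i\<in>UNIV. (f (Inr i) :: 'a::comm_monoid_mult))"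
  using prod.Plus[of "UNIV::'n set" "UNIV::'m set" f] by (simp add: comp_def)

lemma prod_phase_keys_binomial:
  "(\<Prod>k\<in>set phase_keys. of_nat (case_sum (fst b) (snd b) k choose case_sum (fst c) (snd c) k)
      * wave_rate l (phase_axis k) ^ case_sum (fst c) (snd c) k)
    = of_nat (mi_binom b c) * wave_rate_pow l c"
  unfolding phase_keys_distinct_UNIV[THEN conjunct2] prod_UNIV_Plus mi_binom_def wave_rate_pow_def
  by (simp add: phase_axis_def prod.distrib of_nat_prod algebra_simps)

lemma sum_sub_counts_phase_keys:
  fixes b :: "'n::finite midx"
  shows "(\<Sum>c\<in>sub_counts phase_keys (case_sum (fst b) (snd b)). G c) = (\<Sum>c\<in>{c. mi_le c b}. G (case_sum (fst c) (snd c)))"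
proof (rule sum.reindex_bij_witness[where j="\<lambda>c. (c \<circ> Inl, c \<circ> Inr)" and i="\<lambda>c. case_sum (fst c) (snd c)"])
  fix c assume c: "c \<in> sub_counts phase_keys (case_sum (fst b) (snd b))"
  show "case_sum (fst (c \<circ> Inl, c \<circ> Inr)) (snd (c \<circ> Inl, c \<circ> Inr)) = c"
    by (auto simp: fun_eq_iff split: sum.split)
  have c_le: "c k \<le> case_sum (fst b) (snd b) k" for k using c unfolding sub_counts_def by auto
  have "c (Inl i) \<le> fst b i" "c (Inr i) \<le> snd b i" for i
    using c_le[of "Inl i"] c_le[of "Inr i"] by simp_all
  then show "(c \<circ> Inl, c \<circ> Inr) \<in> {c. mi_le c b}" unfolding mi_le_def by auto
next
  fix c assume c: "c \<in> {c. mi_le c b}"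
  show "(case_sum (fst c) (snd c) \<circ> Inl, case_sum (fst c) (snd c) \<circ> Inr) = c"
    by (cases c) (simp add: comp_def)
  show "case_sum (fst c) (snd c) \<in> sub_counts phase_keys (case_sum (fst b) (snd b))"
    using c phase_keys_distinct_UNIV unfolding sub_counts_def mi_le_def by (auto split: sum.split)
qed (rule arg_cong[where f=G], auto simp: fun_eq_iff split: sum.split)

lemma pderiv_mi_plane_wave_mult:
  fixes H :: "'n::finite phase \<Rightarrow> complex"
  assumes "line_smooth H"
  shows "pderiv_mi b (\<lambda>g. plane_wave l \<theta> g * H g) g =
    plane_wave l \<theta> g * (\<Sum>c\<in>{c. mi_le c b}. of_nat (mi_binom b c) * wave_rate_pow l c * pderiv_mi (mi_sub b c) H g)"
proof -
  have "pderiv_mi b (\<lambda>g. plane_wave l \<theta> g * H g)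
      = iter_dderiv (dir_blocks phase_axis phase_keys (case_sum (fst b) (snd b))) (\<lambda>g. plane_wave l \<theta> g * H g)"
    unfolding pderiv_mi_def dir_blocks_phase_keys ..
  also have "\<dots> = (\<lambda>g. plane_wave l \<theta> g * (\<Sum>c\<in>sub_counts phase_keys (case_sum (fst b) (snd b)).
      (\<Prod>k\<in>set phase_keys. of_nat (case_sum (fst b) (snd b) k choose c k) * wave_rate l (phase_axis k) ^ c k)
      * iter_dderiv (dir_blocks phase_axis phase_keys (\<lambda>k. case_sum (fst b) (snd b) k - c k)) H g))"
    by (rule iter_dderiv_dir_blocks_plane_wave_mult[OF assms]) (simp add: phase_keys_distinct_UNIV)
  finally show ?thesis
    unfolding sum_sub_counts_phase_keys prod_phase_keys_binomial dir_blocks_phase_keys pderiv_mi_def by simp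
qed

lemma mi_le_set: "{d. mi_le d a} = PiE (UNIV::'n::finite set) (\<lambda>i. {..fst a i}) \<times> PiE UNIV (\<lambda>i. {..snd a i})"
  unfolding mi_le_def PiE_UNIV_domain by auto

lemma finite_mi_le: "finite {d. mi_le d (a :: 'n::finite midx)}"
  unfolding mi_le_set by (intro finite_cartesian_product finite_PiE) auto

lemma prod_binomial:
  fixes u w :: "'n::finite \<Rightarrow> real"
  shows "(\<Prod>i\<in>UNIV. (u i + w i) ^ n i)
    = (\<Sum>d\<in>PiE UNIV (\<lambda>i. {..n i}). \<Prod>i\<in>UNIV. real (n i choose d i) * u i ^ (n i - d i) * w i ^ d i)"
proof -
  have "(\<Prod>i\<in>UNIV. (u i + w i) ^ n i) = (\<Prod>i\<in>UNIV. \<Sum>k\<le>n i. real (n i choose k) * u i ^ (n i - k) * w i ^ k)"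
    by (intro prod.cong refl) (subst add.commute, subst binomial_ring, simp add: ac_simps)
  also have "\<dots> = (\<Sum>d\<in>PiE UNIV (\<lambda>i. {..n i}). \<Prod>i\<in>UNIV. real (n i choose d i) * u i ^ (n i - d i) * w i ^ d i)"
    by (rule prod_sum_PiE) auto
  finally show ?thesis .
qed

lemma mi_pow_binomial:
  fixes u w :: "'n::finite phase"
  shows "mi_pow (u + w) a = (\<Sum>d\<in>{d. mi_le d a}. real (mi_binom a d) * mi_pow u (mi_sub a d) * mi_pow w d)"
proof -
  have "mi_pow (u + w) a = (\<Prod>i\<in>UNIV. (fst u $ i + fst w $ i) ^ fst a i) * (\<Prod>i\<in>UNIV. (snd u $ i + snd w $ i) ^ snd a i)"
    unfolding mi_pow_def by simp
  also have "\<dots> = (\<Sum>d\<in>PiE UNIV (\<lambda>i. {..fst a i}) \<times> PiE UNIV (\<lambda>i. {..snd a i}).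
        (\<Prod>i\<in>UNIV. real (fst a i choose fst d i) * (fst u $ i) ^ (fst a i - fst d i) * (fst w $ i) ^ fst d i) *
        (\<Prod>i\<in>UNIV. real (snd a i choose snd d i) * (snd u $ i) ^ (snd a i - snd d i) * (snd w $ i) ^ snd d i))"
    by (simp add: prod_binomial sum_product sum.cartesian_product case_prod_beta)
  also have "\<dots> = (\<Sum>d\<in>{d. mi_le d a}. real (mi_binom a d) * mi_pow u (mi_sub a d) * mi_pow w d)"
    unfolding mi_le_set
    by (intro sum.cong refl) (simp add: mi_binom_def mi_pow_def mi_sub_def prod.distrib of_nat_prod ac_simps)
  finally show ?thesis .
qed

lemma mi_pow_add: "mi_pow g (mi_add r s) = mi_pow g r * mi_pow g s"
  unfolding mi_pow_def mi_add_def by (simp add: power_add prod.distrib ac_simps)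

lemma mi_pow_scaleR: "mi_pow (c *\<^sub>R g) d = c ^ mi_abs d * mi_pow g d"
  unfolding mi_pow_def mi_abs_def by (simp add: power_mult_distrib prod.distrib power_add power_sum ac_simps)

lemma abs_mi_pow_uminus: "\<bar>mi_pow (- g) r\<bar> = \<bar>mi_pow g r\<bar>"
  unfolding mi_pow_def by (simp add: abs_mult abs_prod power_abs)

lemma abs_mi_pow_le:
  fixes g :: "'n::finite phase"
  assumes "norm g \<le> R"
  shows "\<bar>mi_pow g r\<bar> \<le> R ^ mi_abs r"
proof -
  have R: "0 \<le> R" using assms norm_ge_zero order_trans by blast
  have fst_le: "\<bar>fst g $ i\<bar> \<le> R" for i
    using component_le_norm_cart[of "fst g" i] norm_fst_le[of "fst g" "snd g"] assms by simp
  have snd_le: "\<bar>snd g $ i\<bar> \<le> R" for i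
    using component_le_norm_cart[of "snd g" i] norm_snd_le[of "snd g" "fst g"] assms by simp
  have "\<bar>mi_pow g r\<bar> = (\<Prod>i\<in>UNIV. \<bar>fst g $ i\<bar> ^ fst r i) * (\<Prod>i\<in>UNIV. \<bar>snd g $ i\<bar> ^ snd r i)"
    unfolding mi_pow_def by (simp add: abs_mult abs_prod power_abs)
  also have "\<dots> \<le> (\<Prod>i\<in>UNIV. R ^ fst r i) * (\<Prod>i\<in>UNIV. R ^ snd r i)"
    by (intro mult_mono prod_mono conjI power_mono fst_le snd_le) (auto intro!: prod_nonneg simp: R)
  also have "\<dots> = R ^ mi_abs r" unfolding mi_abs_def by (simp add: power_add power_sum)
  finally show ?thesis .
qed

lemma mi_hat_hat [simp]: "mi_hat (mi_hat e) = e"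
  unfolding mi_hat_def by simp

lemma mi_le_hat_iff: "mi_le (mi_hat e) c \<longleftrightarrow> mi_le e (mi_hat c)"
  unfolding mi_hat_def mi_le_def by auto

lemma mi_binom_hat: "mi_binom c (mi_hat e) = mi_binom (mi_hat c) e"
  unfolding mi_hat_def mi_binom_def by (simp add: mult.commute)

lemma mi_sub_hat: "mi_sub (mi_hat c) (mi_hat e) = mi_hat (mi_sub c e)"
  unfolding mi_hat_def mi_sub_def by simp

lemma mi_abs_hat: "mi_abs (mi_hat r) = mi_abs r"
  unfolding mi_abs_def mi_hat_def by simp

lemma mi_abs_add: "mi_abs (mi_add r s) = mi_abs r + mi_abs s"
  unfolding mi_abs_def mi_add_def by (simp add: sum.distrib)

lemma mi_abs_sub_add:
  assumes "mi_le s r"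
  shows "mi_abs (mi_sub r s) + mi_abs s = mi_abs r"
proof -
  have "(\<Sum>i\<in>UNIV. fst r i - fst s i) + (\<Sum>i\<in>UNIV. fst s i) = (\<Sum>i\<in>UNIV. fst r i)"
    "(\<Sum>i\<in>UNIV. snd r i - snd s i) + (\<Sum>i\<in>UNIV. snd s i) = (\<Sum>i\<in>UNIV. snd r i)"
    using assms unfolding mi_le_def by (simp_all add: sum.distrib[symmetric])
  then show ?thesis unfolding mi_abs_def mi_sub_def by simp
qed

lemma mi_abs_mono: "mi_le s r \<Longrightarrow> mi_abs s \<le> mi_abs r"
  unfolding mi_abs_def mi_le_def by (intro add_mono sum_mono) auto

lemma sum_mi_binom: "(\<Sum>e\<in>{e. mi_le e c}. real (mi_binom c e)) = 2 ^ mi_abs (c :: 'n::finite midx)"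
proof -
  define one :: "'n phase" where "one = ((\<chi> i. 1), (\<chi> i. 1))"
  have one_pow: "mi_pow one d = 1" for d unfolding mi_pow_def one_def by simp
  have "mi_pow ((2::real) *\<^sub>R one) c = 2 ^ mi_abs c" by (simp add: mi_pow_scaleR one_pow)
  then show ?thesis using mi_pow_binomial[of one one c] by (simp add: scaleR_2 one_pow)
qed

lemma mi_binom_le: "mi_le e c \<Longrightarrow> real (mi_binom c e) \<le> 2 ^ mi_abs c"
  unfolding sum_mi_binom[symmetric] by (rule member_le_sum) (auto simp: finite_mi_le)

lemma sum_mi_le_reflect: "(\<Sum>d\<in>{d. mi_le d a}. F (mi_sub a d)) = (\<Sum>d\<in>{d. mi_le d a}. F d)"
proof -
  have "mi_le d a \<Longrightarrow> mi_sub a (mi_sub a d) = d" for d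
    unfolding mi_le_def mi_sub_def by (cases d) (auto simp: fun_eq_iff)
  moreover have "mi_le (mi_sub a d) a" for d
    unfolding mi_le_def mi_sub_def by auto
  ultimately show ?thesis
    by (intro sum.reindex_bij_witness[where i="mi_sub a" and j="mi_sub a"]) auto
qed

lemma abs_mi_pow_add_le:
  "\<bar>mi_pow (u + w) a\<bar> \<le> (\<Sum>d\<in>{d. mi_le d a}. real (mi_binom a d) * \<bar>mi_pow u (mi_sub a d)\<bar> * \<bar>mi_pow w d\<bar>)"
  unfolding mi_pow_binomial by (rule order_trans[OF sum_abs]) (simp add: abs_mult)

definition dtrans_wave :: "'n::finite phase \<Rightarrow> 'n phase \<Rightarrow> 'n phase" where
  "dtrans_wave \<alpha> \<beta> = (snd \<alpha> - snd \<beta>, fst \<beta> - fst \<alpha>)"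

definition dtrans_phase :: "'n::finite phase \<Rightarrow> 'n phase \<Rightarrow> real" where
  "dtrans_phase \<alpha> \<beta> = (fst \<alpha> \<bullet> snd \<beta> - fst \<beta> \<bullet> snd \<alpha>) / 2"

lemma rank_one_Dtrans_integrand_shift:
  fixes chi :: "real^'n::finite \<Rightarrow> complex" and \<alpha> \<beta> g :: "'n phase"
  defines "m \<equiv> g - (1/2) *\<^sub>R (\<alpha> + \<beta>)" and "\<delta> \<equiv> fst \<beta> - fst \<alpha>"
  shows "exp (\<i> * of_real (snd g \<bullet> (\<delta> + z)))
      * rank_one (Dtrans \<alpha> chi) (Dtrans \<beta> chi) (fst g - (1/2) *\<^sub>R (\<delta> + z)) (fst g + (1/2) *\<^sub>R (\<delta> + z))
    = plane_wave (dtrans_wave \<alpha> \<beta>) (dtrans_phase \<alpha> \<beta>) g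
      * (exp (\<i> * of_real (snd m \<bullet> z)) * rank_one chi chi (fst m - (1/2) *\<^sub>R z) (fst m + (1/2) *\<^sub>R z))"
proof -
  obtain x p ax ap bx bp where g: "g = (x, p)" and a: "\<alpha> = (ax, ap)" and b: "\<beta> = (bx, bp)"
    by (cases g, cases \<alpha>, cases \<beta>)
  have m: "m = (x - (1/2) *\<^sub>R (ax + bx), p - (1/2) *\<^sub>R (ap + bp))"
    unfolding m_def g a b by simp
  have phase: "p \<bullet> (\<delta> + z) + (x - (1/2) *\<^sub>R (\<delta> + z) - (1/2) *\<^sub>R ax) \<bullet> ap - (x + (1/2) *\<^sub>R (\<delta> + z) - (1/2) *\<^sub>R bx) \<bullet> bp
      = (dtrans_wave \<alpha> \<beta> \<bullet> g + dtrans_phase \<alpha> \<beta>) + snd m \<bullet> z"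
    unfolding \<delta>_def m dtrans_wave_def dtrans_phase_def a b g
    by (simp add: inner_simps inner_commute algebra_simps) (simp add: field_simps)
  have left: "x - (1/2) *\<^sub>R (\<delta> + z) - ax = fst m - (1/2) *\<^sub>R z"
    and right: "x + (1/2) *\<^sub>R (\<delta> + z) - bx = fst m + (1/2) *\<^sub>R z"
    unfolding \<delta>_def m a b by (simp_all add: vec_eq_iff algebra_simps)
  have exp_combine: "exp (\<i> * of_real u) * exp (\<i> * of_real v) * cnj (exp (\<i> * of_real w))
      = exp (\<i> * of_real (u + v - w))" for u v w :: real
    by (simp add: exp_cnj algebra_simps flip: exp_add)
  show ?thesis
    unfolding rank_one_def Dtrans_def plane_wave_def g a b fst_conv snd_conv left[unfolded g a b fst_conv]
      right[unfolded g a b fst_conv]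
    using exp_combine[of "p \<bullet> (\<delta> + z)" "(x - (1/2) *\<^sub>R (\<delta> + z) - (1/2) *\<^sub>R ax) \<bullet> ap"
        "(x + (1/2) *\<^sub>R (\<delta> + z) - (1/2) *\<^sub>R bx) \<bullet> bp"]
    unfolding phase[unfolded g a b] by (simp add: exp_add distrib_left ac_simps)
qed

definition dtrans_coeff :: "'n::finite phase \<Rightarrow> 'n phase \<Rightarrow> 'n midx \<Rightarrow> 'n midx \<Rightarrow> 'n midx \<Rightarrow> 'n midx \<Rightarrow> 'n midx \<Rightarrow> 'n midx \<Rightarrow> real" where
  "dtrans_coeff \<alpha> \<beta> a b c d e f =
     real (mi_binom b c * mi_binom a d * mi_binom c e * mi_binom d f) * (1 / 2 ^ mi_abs d)
     * \<bar>mi_pow \<alpha> (mi_add (mi_hat e) f) * mi_pow \<beta> (mi_add (mi_sub (mi_hat c) (mi_hat e)) (mi_sub d f))\<bar>"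

lemma dtrans_coeff_nonneg: "0 \<le> dtrans_coeff \<alpha> \<beta> a b c d e f"
  unfolding dtrans_coeff_def by simp

lemma norm_wave_rate_pow_dtrans_wave_le:
  "cmod (wave_rate_pow (dtrans_wave \<alpha> \<beta>) c)
    \<le> (\<Sum>e\<in>{e. mi_le e c}. real (mi_binom c e) * \<bar>mi_pow \<alpha> (mi_hat e)\<bar> * \<bar>mi_pow \<beta> (mi_sub (mi_hat c) (mi_hat e))\<bar>)"
proof -
  have "cmod (wave_rate_pow (dtrans_wave \<alpha> \<beta>) c)
      = (\<Prod>i\<in>UNIV. \<bar>snd \<alpha> $ i - snd \<beta> $ i\<bar> ^ fst c i) * (\<Prod>i\<in>UNIV. \<bar>fst \<beta> $ i - fst \<alpha> $ i\<bar> ^ snd c i)"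
    unfolding wave_rate_pow_def wave_rate_def dtrans_wave_def
    by (simp add: norm_mult prod_norm[symmetric] norm_power cart_eq_inner_axis[symmetric] inner_Pair_0
        norm_of_real del: of_real_diff)
  also have "\<dots> = \<bar>mi_pow (- \<beta> + \<alpha>) (mi_hat c)\<bar>"
    unfolding mi_pow_def mi_hat_def by (simp add: abs_mult abs_prod power_abs abs_minus_commute mult.commute)
  also have "\<dots> \<le> (\<Sum>e\<in>{e. mi_le e (mi_hat c)}. real (mi_binom (mi_hat c) e) * \<bar>mi_pow \<beta> (mi_sub (mi_hat c) e)\<bar> * \<bar>mi_pow \<alpha> e\<bar>)"
    using abs_mi_pow_add_le[of "- \<beta>" \<alpha> "mi_hat c"] by (simp add: abs_mi_pow_uminus)
  also have "\<dots> = (\<Sum>e\<in>{e. mi_le e c}. real (mi_binom c e) * \<bar>mi_pow \<alpha> (mi_hat e)\<bar> * \<bar>mi_pow \<beta> (mi_sub (mi_hat c) (mi_hat e))\<bar>)"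
    by (rule sum.reindex_bij_witness[where i=mi_hat and j=mi_hat]) (simp_all add: mi_binom_hat mi_le_hat_iff)
  finally show ?thesis .
qed

lemma abs_mi_pow_midpoint_le:
  "\<bar>mi_pow ((1/2) *\<^sub>R (\<alpha> + \<beta>)) d\<bar>
    \<le> (1/2) ^ mi_abs d * (\<Sum>f\<in>{f. mi_le f d}. real (mi_binom d f) * \<bar>mi_pow \<alpha> f\<bar> * \<bar>mi_pow \<beta> (mi_sub d f)\<bar>)"
  using mult_left_mono[OF abs_mi_pow_add_le[of \<beta> \<alpha> d], of "(1/2) ^ mi_abs d"]
  by (simp add: mi_pow_scaleR abs_mult add.commute ac_simps)

lemma dtrans_coeff_factor:
  "real (mi_binom b c) * real (mi_binom a d)
    * ((\<Sum>e\<in>{e. mi_le e c}. real (mi_binom c e) * \<bar>mi_pow \<alpha> (mi_hat e)\<bar> * \<bar>mi_pow \<beta> (mi_sub (mi_hat c) (mi_hat e))\<bar>)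
    * ((1/2) ^ mi_abs d * (\<Sum>f\<in>{f. mi_le f d}. real (mi_binom d f) * \<bar>mi_pow \<alpha> f\<bar> * \<bar>mi_pow \<beta> (mi_sub d f)\<bar>)))
  = (\<Sum>e\<in>{e. mi_le e c}. \<Sum>f\<in>{f. mi_le f d}. dtrans_coeff \<alpha> \<beta> a b c d e f)"
proof -
  have product: "(\<Sum>e\<in>{e. mi_le e c}. real (mi_binom c e) * \<bar>mi_pow \<alpha> (mi_hat e)\<bar> * \<bar>mi_pow \<beta> (mi_sub (mi_hat c) (mi_hat e))\<bar>)
      * ((1/2) ^ mi_abs d * (\<Sum>f\<in>{f. mi_le f d}. real (mi_binom d f) * \<bar>mi_pow \<alpha> f\<bar> * \<bar>mi_pow \<beta> (mi_sub d f)\<bar>))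
    = (\<Sum>e\<in>{e. mi_le e c}. \<Sum>f\<in>{f. mi_le f d}. (real (mi_binom c e) * \<bar>mi_pow \<alpha> (mi_hat e)\<bar>
        * \<bar>mi_pow \<beta> (mi_sub (mi_hat c) (mi_hat e))\<bar>) * ((1/2) ^ mi_abs d * (real (mi_binom d f) * \<bar>mi_pow \<alpha> f\<bar>
        * \<bar>mi_pow \<beta> (mi_sub d f)\<bar>)))"
    unfolding sum_distrib_left[of "(1/2) ^ mi_abs d"] by (rule sum_product)
  show ?thesis
    unfolding product unfolding sum_distrib_left
    by (intro sum.cong refl,
        unfold dtrans_coeff_def mi_pow_add abs_mult power_one_over of_nat_mult, simp add: ac_simps)
qed

lemma pderiv_mi_dtrans_form:
  assumes "line_smooth H"
  shows "pderiv_mi b (\<lambda>g. plane_wave l \<theta> g * H (g - m)) \<gamma>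
    = plane_wave l \<theta> \<gamma> * (\<Sum>c\<in>{c. mi_le c b}. of_nat (mi_binom b c) * wave_rate_pow l c * pderiv_mi (mi_sub b c) H (\<gamma> - m))"
  using pderiv_mi_plane_wave_mult[OF line_smooth_shift[OF assms, of m], of b l \<theta> \<gamma>]
  unfolding pderiv_mi_def iter_dderiv_shift by simp

lemma norm_pderiv_mi_dtrans_le:
  fixes H :: "'n::finite phase \<Rightarrow> complex" and \<alpha> \<beta> :: "'n phase"
  assumes smooth: "line_smooth H"
  defines "m \<equiv> (1/2) *\<^sub>R (\<alpha> + \<beta>)"
  shows "cmod (of_real (mi_pow \<gamma> a) * pderiv_mi b (\<lambda>g. plane_wave (dtrans_wave \<alpha> \<beta>) \<theta> g * H (g - m)) \<gamma>)
    \<le> (\<Sum>c\<in>{c. mi_le c b}. \<Sum>d\<in>{d. mi_le d a}. (\<Sum>e\<in>{e. mi_le e c}. \<Sum>f\<in>{f. mi_le f d}. dtrans_coeff \<alpha> \<beta> a b c d e f)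
         * cmod (of_real (mi_pow (\<gamma> - m) (mi_sub a d)) * pderiv_mi (mi_sub b c) H (\<gamma> - m)))"
proof -
  define Y where "Y c = pderiv_mi (mi_sub b c) H (\<gamma> - m)" for c
  define A where "A c = (\<Sum>e\<in>{e. mi_le e c}. real (mi_binom c e) * \<bar>mi_pow \<alpha> (mi_hat e)\<bar>
    * \<bar>mi_pow \<beta> (mi_sub (mi_hat c) (mi_hat e))\<bar>)" for c
  define M where "M d = (1/2) ^ mi_abs d * (\<Sum>f\<in>{f. mi_le f d}. real (mi_binom d f) * \<bar>mi_pow \<alpha> f\<bar>
    * \<bar>mi_pow \<beta> (mi_sub d f)\<bar>)" for d
  have "\<bar>mi_pow ((\<gamma> - m) + m) a\<bar> \<le> (\<Sum>d\<in>{d. mi_le d a}. real (mi_binom a d) * \<bar>mi_pow (\<gamma> - m) (mi_sub a d)\<bar> * \<bar>mi_pow m d\<bar>)"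
    by (rule abs_mi_pow_add_le)
  also have "\<dots> \<le> (\<Sum>d\<in>{d. mi_le d a}. real (mi_binom a d) * \<bar>mi_pow (\<gamma> - m) (mi_sub a d)\<bar> * M d)"
    unfolding M_def m_def by (intro sum_mono mult_left_mono abs_mi_pow_midpoint_le) auto
  finally have weight: "\<bar>mi_pow \<gamma> a\<bar> \<le> (\<Sum>d\<in>{d. mi_le d a}. real (mi_binom a d) * \<bar>mi_pow (\<gamma> - m) (mi_sub a d)\<bar> * M d)"
    by simp
  have "cmod (\<Sum>c\<in>{c. mi_le c b}. of_nat (mi_binom b c) * wave_rate_pow (dtrans_wave \<alpha> \<beta>) c * Y c)
      \<le> (\<Sum>c\<in>{c. mi_le c b}. real (mi_binom b c) * cmod (wave_rate_pow (dtrans_wave \<alpha> \<beta>) c) * cmod (Y c))"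
    by (rule order_trans[OF norm_sum]) (simp add: norm_mult)
  also have "\<dots> \<le> (\<Sum>c\<in>{c. mi_le c b}. real (mi_binom b c) * A c * cmod (Y c))"
    unfolding A_def by (intro sum_mono mult_right_mono mult_left_mono norm_wave_rate_pow_dtrans_wave_le) auto
  finally have derivatives: "cmod (\<Sum>c\<in>{c. mi_le c b}. of_nat (mi_binom b c) * wave_rate_pow (dtrans_wave \<alpha> \<beta>) c * Y c)
      \<le> (\<Sum>c\<in>{c. mi_le c b}. real (mi_binom b c) * A c * cmod (Y c))" .
  have "cmod (of_real (mi_pow \<gamma> a) * pderiv_mi b (\<lambda>g. plane_wave (dtrans_wave \<alpha> \<beta>) \<theta> g * H (g - m)) \<gamma>)
      = \<bar>mi_pow \<gamma> a\<bar> * cmod (\<Sum>c\<in>{c. mi_le c b}. of_nat (mi_binom b c) * wave_rate_pow (dtrans_wave \<alpha> \<beta>) c * Y c)"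
    unfolding pderiv_mi_dtrans_form[OF smooth] Y_def by (simp add: norm_mult)
  also have "\<dots> \<le> (\<Sum>d\<in>{d. mi_le d a}. real (mi_binom a d) * \<bar>mi_pow (\<gamma> - m) (mi_sub a d)\<bar> * M d)
      * (\<Sum>c\<in>{c. mi_le c b}. real (mi_binom b c) * A c * cmod (Y c))"
    by (intro mult_mono weight derivatives) (auto simp: A_def M_def intro!: sum_nonneg mult_nonneg_nonneg)
  also have "\<dots> = (\<Sum>c\<in>{c. mi_le c b}. \<Sum>d\<in>{d. mi_le d a}. (real (mi_binom b c) * real (mi_binom a d) * (A c * M d))
      * cmod (of_real (mi_pow (\<gamma> - m) (mi_sub a d)) * Y c))"
    by (simp add: sum_product sum.swap[of _ "{d. mi_le d a}"] norm_mult ac_simps)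
  finally show ?thesis
    unfolding A_def M_def dtrans_coeff_factor Y_def .
qed

lemma seminorm_dtrans_le:
  fixes H :: "'n::finite phase \<Rightarrow> complex" and \<alpha> \<beta> :: "'n phase"
  assumes "line_smooth H"
  shows "seminorm (\<lambda>g. plane_wave (dtrans_wave \<alpha> \<beta>) \<theta> g * H (g - (1/2) *\<^sub>R (\<alpha> + \<beta>))) a b
    \<le> (\<Sum>c\<in>{c. mi_le c b}. \<Sum>d\<in>{d. mi_le d a}.
          ennreal (\<Sum>e\<in>{e. mi_le e c}. \<Sum>f\<in>{f. mi_le f d}. dtrans_coeff \<alpha> \<beta> a b c d e f)
          * seminorm H (mi_sub a d) (mi_sub b c))"
  unfolding seminorm_def[of "\<lambda>g. plane_wave (dtrans_wave \<alpha> \<beta>) \<theta> g * H (g - (1/2) *\<^sub>R (\<alpha> + \<beta>))"]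
proof (rule SUP_least)
  fix \<gamma> :: "'n phase"
  define m where "m = (1/2) *\<^sub>R (\<alpha> + \<beta>)"
  define C where "C c d = (\<Sum>e\<in>{e. mi_le e c}. \<Sum>f\<in>{f. mi_le f d}. dtrans_coeff \<alpha> \<beta> a b c d e f)" for c d
  define Z where "Z c d = cmod (of_real (mi_pow (\<gamma> - m) (mi_sub a d)) * pderiv_mi (mi_sub b c) H (\<gamma> - m))" for c d
  have C: "0 \<le> C c d" for c d unfolding C_def by (intro sum_nonneg dtrans_coeff_nonneg)
  have Z: "ennreal (Z c d) \<le> seminorm H (mi_sub a d) (mi_sub b c)" for c d
    unfolding seminorm_def Z_def by (rule SUP_upper) simp
  have "ennreal (cmod (of_real (mi_pow \<gamma> a) * pderiv_mi b (\<lambda>g. plane_wave (dtrans_wave \<alpha> \<beta>) \<theta> g * H (g - m)) \<gamma>))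
      \<le> ennreal (\<Sum>c\<in>{c. mi_le c b}. \<Sum>d\<in>{d. mi_le d a}. C c d * Z c d)"
    unfolding C_def Z_def m_def by (intro ennreal_leI norm_pderiv_mi_dtrans_le assms)
  also have "\<dots> = (\<Sum>c\<in>{c. mi_le c b}. \<Sum>d\<in>{d. mi_le d a}. ennreal (C c d) * ennreal (Z c d))"
    using C by (simp add: Z_def ennreal_mult[symmetric] sum_nonneg)
  also have "\<dots> \<le> (\<Sum>c\<in>{c. mi_le c b}. \<Sum>d\<in>{d. mi_le d a}. ennreal (C c d) * seminorm H (mi_sub a d) (mi_sub b c))"
    by (intro sum_mono mult_left_mono Z) auto
  finally show "ennreal (cmod (of_real (mi_pow \<gamma> a)
      * pderiv_mi b (\<lambda>g. plane_wave (dtrans_wave \<alpha> \<beta>) \<theta> g * H (g - (1/2) *\<^sub>R (\<alpha> + \<beta>))) \<gamma>))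
    \<le> (\<Sum>c\<in>{c. mi_le c b}. \<Sum>d\<in>{d. mi_le d a}. ennreal (C c d) * seminorm H (mi_sub a d) (mi_sub b c))"
    unfolding m_def .
qed

lemma abs_dtrans_monomial_le:
  fixes \<alpha> \<beta> :: "'n::finite phase"
  assumes e: "mi_le e c" and f: "mi_le f d"
  shows "\<bar>mi_pow \<alpha> (mi_add (mi_hat e) f) * mi_pow \<beta> (mi_add (mi_sub (mi_hat c) (mi_hat e)) (mi_sub d f))\<bar>
    \<le> (1 + norm \<alpha> + norm \<beta>) ^ (mi_abs c + mi_abs d)"
proof -
  define R where "R = 1 + norm \<alpha> + norm \<beta>"
  have "\<bar>mi_pow \<alpha> (mi_add (mi_hat e) f) * mi_pow \<beta> (mi_add (mi_sub (mi_hat c) (mi_hat e)) (mi_sub d f))\<bar>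
      \<le> R ^ mi_abs (mi_add (mi_hat e) f) * R ^ mi_abs (mi_add (mi_sub (mi_hat c) (mi_hat e)) (mi_sub d f))"
    unfolding abs_mult by (intro mult_mono abs_mi_pow_le) (auto simp: R_def)
  moreover have "mi_abs (mi_add (mi_hat e) f) + mi_abs (mi_add (mi_sub (mi_hat c) (mi_hat e)) (mi_sub d f))
      = mi_abs c + mi_abs d"
    using mi_abs_sub_add[OF e] mi_abs_sub_add[OF f] by (simp add: mi_abs_add mi_sub_hat mi_abs_hat)
  ultimately show ?thesis unfolding R_def by (simp add: power_add[symmetric])
qed

lemma sum_dtrans_coeff_le:
  fixes \<alpha> \<beta> :: "'n::finite phase"
  assumes cb: "mi_le c b" and da: "mi_le d a"
  shows "(\<Sum>e\<in>{e. mi_le e c}. \<Sum>f\<in>{f. mi_le f d}. dtrans_coeff \<alpha> \<beta> a b c d e f)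
     \<le> 4 ^ (mi_abs a + mi_abs b) * (1 + norm \<alpha> + norm \<beta>) ^ (mi_abs a + mi_abs b)"
proof -
  define R where "R = 1 + norm \<alpha> + norm \<beta>"
  define N where "N = mi_abs a + mi_abs b"
  have R: "1 \<le> R" unfolding R_def by simp
  have power_le: "\<bar>mi_pow \<alpha> (mi_add (mi_hat e) f) * mi_pow \<beta> (mi_add (mi_sub (mi_hat c) (mi_hat e)) (mi_sub d f))\<bar> \<le> R ^ N"
    if "mi_le e c" and "mi_le f d" for e f
    using abs_dtrans_monomial_le[OF that, of \<alpha> \<beta>] power_increasing[OF _ R, of "mi_abs c + mi_abs d" N]
      mi_abs_mono[OF cb] mi_abs_mono[OF da]
    unfolding R_def N_def by linarith
  have "(\<Sum>e\<in>{e. mi_le e c}. \<Sum>f\<in>{f. mi_le f d}. dtrans_coeff \<alpha> \<beta> a b c d e f)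
     \<le> (\<Sum>e\<in>{e. mi_le e c}. \<Sum>f\<in>{f. mi_le f d}.
           real (mi_binom b c * mi_binom a d * mi_binom c e * mi_binom d f) * (1 / 2 ^ mi_abs d) * R ^ N)"
    unfolding dtrans_coeff_def by (intro sum_mono mult_left_mono power_le) auto
  also have "\<dots> = real (mi_binom b c) * real (mi_binom a d) * (1 / 2 ^ mi_abs d) * R ^ N
       * (\<Sum>e\<in>{e. mi_le e c}. real (mi_binom c e)) * (\<Sum>f\<in>{f. mi_le f d}. real (mi_binom d f))"
    by (simp add: sum_distrib_left sum_distrib_right sum_product sum_divide_distrib ac_simps)
  also have "\<dots> = real (mi_binom b c) * real (mi_binom a d) * R ^ N * 2 ^ mi_abs c"
    unfolding sum_mi_binom by simp
  also have "\<dots> \<le> 2 ^ mi_abs b * 2 ^ mi_abs a * R ^ N * 2 ^ mi_abs b"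
    using R mi_abs_mono[OF cb] by (intro mult_mono mi_binom_le cb da power_increasing) auto
  also have "\<dots> \<le> 4 ^ N * R ^ N"
  proof -
    have "(2::real) ^ mi_abs b * 2 ^ mi_abs a * 2 ^ mi_abs b \<le> 2 ^ mi_abs a * 2 ^ mi_abs a * (2 ^ mi_abs b * 2 ^ mi_abs b)"
      by (simp add: ac_simps)
    also have "\<dots> = 4 ^ N"
      unfolding N_def by (simp add: power_add power_mult_distrib[symmetric])
    finally show ?thesis using R by (simp add: mult_right_mono ac_simps)
  qed
  finally show ?thesis unfolding R_def N_def .
qed

lemma sum_dtrans_seminorm_le:
  fixes \<alpha> \<beta> :: "'n::finite phase"
  shows "(\<Sum>c\<in>{c. mi_le c b}. \<Sum>d\<in>{d. mi_le d a}.
          ennreal (\<Sum>e\<in>{e. mi_le e c}. \<Sum>f\<in>{f. mi_le f d}. dtrans_coeff \<alpha> \<beta> a b c d e f)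
          * seminorm H (mi_sub a d) (mi_sub b c))
    \<le> ennreal (4 ^ (mi_abs a + mi_abs b) * (1 + norm \<alpha> + norm \<beta>) ^ (mi_abs a + mi_abs b)) * seminorm_sum H a b"
proof -
  let ?K = "4 ^ (mi_abs a + mi_abs b) * (1 + norm \<alpha> + norm \<beta>) ^ (mi_abs a + mi_abs b)"
  have "(\<Sum>c\<in>{c. mi_le c b}. \<Sum>d\<in>{d. mi_le d a}.
          ennreal (\<Sum>e\<in>{e. mi_le e c}. \<Sum>f\<in>{f. mi_le f d}. dtrans_coeff \<alpha> \<beta> a b c d e f)
          * seminorm H (mi_sub a d) (mi_sub b c))
      \<le> (\<Sum>c\<in>{c. mi_le c b}. \<Sum>d\<in>{d. mi_le d a}. ennreal ?K * seminorm H (mi_sub a d) (mi_sub b c))"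
    by (intro sum_mono mult_right_mono ennreal_leI sum_dtrans_coeff_le) auto
  also have "\<dots> = ennreal ?K * (\<Sum>d\<in>{d. mi_le d a}. \<Sum>c\<in>{c. mi_le c b}. seminorm H (mi_sub a d) (mi_sub b c))"
    by (simp add: sum_distrib_left) (rule sum.swap)
  also have "(\<Sum>d\<in>{d. mi_le d a}. \<Sum>c\<in>{c. mi_le c b}. seminorm H (mi_sub a d) (mi_sub b c)) = seminorm_sum H a b"
    unfolding seminorm_sum_def
    using sum_mi_le_reflect[of "\<lambda>a'. \<Sum>c\<in>{c. mi_le c b}. seminorm H a' (mi_sub b c)" a]
          sum_mi_le_reflect[of "\<lambda>b'. seminorm H _ b'" b]
    by simp
  finally show ?thesis .
qed

lemma sum_dtrans_ennreal_eq:
  "(\<Sum>c\<in>{c. mi_le c b}. \<Sum>d\<in>{d. mi_le d a}. \<Sum>e\<in>{e. mi_le e c}. \<Sum>f\<in>{f. mi_le f d}.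
      of_nat (mi_binom b c * mi_binom a d * mi_binom c e * mi_binom d f) * ennreal (1 / 2 ^ mi_abs d) * S c d
      * ennreal \<bar>mi_pow \<alpha> (mi_add (mi_hat e) f) * mi_pow \<beta> (mi_add (mi_sub (mi_hat c) (mi_hat e)) (mi_sub d f))\<bar>)
   = (\<Sum>c\<in>{c. mi_le c b}. \<Sum>d\<in>{d. mi_le d a}.
      ennreal (\<Sum>e\<in>{e. mi_le e c}. \<Sum>f\<in>{f. mi_le f d}. dtrans_coeff \<alpha> \<beta> a b c d e f) * S c d)"
proof (intro sum.cong refl)
  fix c d
  have "(\<Sum>e\<in>{e. mi_le e c}. \<Sum>f\<in>{f. mi_le f d}.
      of_nat (mi_binom b c * mi_binom a d * mi_binom c e * mi_binom d f) * ennreal (1 / 2 ^ mi_abs d) * S c d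
      * ennreal \<bar>mi_pow \<alpha> (mi_add (mi_hat e) f) * mi_pow \<beta> (mi_add (mi_sub (mi_hat c) (mi_hat e)) (mi_sub d f))\<bar>)
    = (\<Sum>e\<in>{e. mi_le e c}. \<Sum>f\<in>{f. mi_le f d}. ennreal (dtrans_coeff \<alpha> \<beta> a b c d e f)) * S c d"
  proof -
    have summand: "of_nat N * ennreal x * T * ennreal P = ennreal (real N * x * P) * T"
      if "0 \<le> x" "0 \<le> P" for N x P and T :: ennreal
      using that by (simp add: ennreal_mult ennreal_of_nat_eq_real_of_nat ac_simps)
    show ?thesis
      unfolding dtrans_coeff_def sum_distrib_right by (intro sum.cong refl summand) auto
  qed
  also have "\<dots> = ennreal (\<Sum>e\<in>{e. mi_le e c}. \<Sum>f\<in>{f. mi_le f d}. dtrans_coeff \<alpha> \<beta> a b c d e f) * S c d"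
    by (simp add: sum_nonneg dtrans_coeff_nonneg)
  finally show "(\<Sum>e\<in>{e. mi_le e c}. \<Sum>f\<in>{f. mi_le f d}.
      of_nat (mi_binom b c * mi_binom a d * mi_binom c e * mi_binom d f) * ennreal (1 / 2 ^ mi_abs d) * S c d
      * ennreal \<bar>mi_pow \<alpha> (mi_add (mi_hat e) f) * mi_pow \<beta> (mi_add (mi_sub (mi_hat c) (mi_hat e)) (mi_sub d f))\<bar>)
    = ennreal (\<Sum>e\<in>{e. mi_le e c}. \<Sum>f\<in>{f. mi_le f d}. dtrans_coeff \<alpha> \<beta> a b c d e f) * S c d" .
qed

definition vec_monomial :: "('n::finite \<Rightarrow> nat) \<Rightarrow> real^'n \<Rightarrow> real" where
  "vec_monomial k y = (\<Prod>i\<in>UNIV. (y $ i) ^ k i)"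

definition cauchy_weight :: "real^'n::finite \<Rightarrow> real" where
  "cauchy_weight y = (\<Prod>i\<in>UNIV. inverse (1 + (y $ i)\<^sup>2))"

lemma vec_monomial_Suc: "vec_monomial (k(j := Suc (k j))) y = y $ j * vec_monomial k y"
proof -
  have "vec_monomial (k(j := Suc (k j))) y = (\<Prod>i\<in>UNIV. (if i = j then y $ j else 1) * (y $ i) ^ k i)"
    unfolding vec_monomial_def by (intro prod.cong refl) auto
  then show ?thesis unfolding vec_monomial_def by (simp add: prod.distrib prod.delta)
qed

lemma continuous_on_vec_monomial: "continuous_on UNIV (vec_monomial k)"
  unfolding vec_monomial_def by (auto intro!: continuous_intros continuous_on_component)

lemma cauchy_weight_pos: "cauchy_weight y > 0"
  unfolding cauchy_weight_def by (intro prod_pos) (simp add: add_pos_nonneg)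

lemma cauchy_weight_measurable [measurable]: "cauchy_weight \<in> borel_measurable borel"
  unfolding cauchy_weight_def by measurable

lemma integrable_cauchy_weight: "integrable lborel (cauchy_weight :: real^'n::finite \<Rightarrow> real)"
proof -
  have "set_integrable lborel (einterval (-\<infinity>) \<infinity>) (\<lambda>x::real. inverse (1 + x\<^sup>2))"
    by (rule integrable_inverse_1_plus_square)
  moreover have "einterval (-\<infinity>) \<infinity> = UNIV" by (auto simp: einterval_def)
  ultimately have "integrable lborel (\<lambda>x::real. inverse (1 + x\<^sup>2))" by (simp add: set_integrable_def)
  then have finite_1d: "(\<integral>\<^sup>+x. ennreal (inverse (1 + x\<^sup>2)) \<partial>lborel) < \<infinity>"
    unfolding integrable_iff_bounded by (simp add: add_pos_nonneg)
  have inj: "inj_on (\<lambda>i::'n. axis i (1::real)) UNIV" by (auto simp: inj_on_def axis_eq_axis)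
  have Basis_form: "cauchy_weight y = (\<Prod>b\<in>(Basis :: (real^'n) set). inverse (1 + (y \<bullet> b)\<^sup>2))" for y
    unfolding Basis_vec_def cauchy_weight_def
    by (simp add: UNION_singleton_eq_range prod.reindex[OF inj] cart_eq_inner_axis)
  have "ennreal (norm (cauchy_weight (y :: real^'n))) = (\<Prod>b\<in>Basis. ennreal (inverse (1 + (y \<bullet> b)\<^sup>2)))" for y
  proof -
    have "norm (cauchy_weight y) = (\<Prod>b\<in>Basis. inverse (1 + (y \<bullet> b)\<^sup>2))"
      using cauchy_weight_pos[of y] Basis_form[of y] by simp
    then show ?thesis by (simp add: prod_ennreal add_pos_nonneg del: inverse_eq_divide)
  qed
  then have "(\<integral>\<^sup>+y. ennreal (norm (cauchy_weight y)) \<partial>(lborel :: (real^'n) measure))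
      = (\<integral>\<^sup>+y. (\<Prod>b\<in>Basis. ennreal (inverse (1 + (y \<bullet> b)\<^sup>2))) \<partial>(lborel :: (real^'n) measure))"
    by simp
  also have "\<dots> = (\<Prod>b\<in>(Basis :: (real^'n) set). (\<integral>\<^sup>+x. ennreal (inverse (1 + x\<^sup>2)) \<partial>lborel))"
    by (rule nn_integral_lborel_prod) auto
  also have "\<dots> < \<infinity>"
    using finite_1d by (simp add: power_less_top_ennreal)
  finally show ?thesis unfolding integrable_iff_bounded by simp
qed

lemma abs_power_mul_one_plus_square_le:
  fixes a b :: real
  assumes "k + 1 \<le> N"
  shows "\<bar>b - a\<bar> ^ k * (1 + (b - a)\<^sup>2) \<le> 2 ^ N * ((1 + a\<^sup>2) ^ N * (1 + b\<^sup>2) ^ N)"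
proof -
  define u where "u = b - a"
  have "\<bar>u\<bar> \<le> 1 + u\<^sup>2"
    using sum_squares_ge_zero[of "\<bar>u\<bar> - 1" 0] by (simp add: power2_eq_square algebra_simps)
  then have "\<bar>u\<bar> ^ k * (1 + u\<^sup>2) \<le> (1 + u\<^sup>2) ^ k * (1 + u\<^sup>2)"
    by (intro mult_right_mono power_mono) auto
  also have "\<dots> = (1 + u\<^sup>2) ^ (k + 1)" by simp
  also have "\<dots> \<le> (1 + u\<^sup>2) ^ N" by (rule power_increasing[OF assms]) auto
  also have "\<dots> \<le> (2 * ((1 + a\<^sup>2) * (1 + b\<^sup>2))) ^ N"
  proof (rule power_mono)
    have "u\<^sup>2 \<le> 2 * a\<^sup>2 + 2 * b\<^sup>2"
      using sum_squares_ge_zero[of "a + b" 0] by (simp add: u_def power2_eq_square algebra_simps)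
    then show "1 + u\<^sup>2 \<le> 2 * ((1 + a\<^sup>2) * (1 + b\<^sup>2))"
      by (simp add: algebra_simps) (smt (verit) zero_le_mult_iff zero_le_power2)
  qed simp
  finally show ?thesis by (simp add: u_def power_mult_distrib)
qed

definition moment_kernel ::
    "(real^'n::finite \<Rightarrow> complex) \<Rightarrow> ('n \<Rightarrow> nat) \<Rightarrow> (real^'n) list \<Rightarrow> (real^'n) list \<Rightarrow> real^'n \<Rightarrow> real^'n \<Rightarrow> complex" where
  "moment_kernel chi k us ws x y = of_real (vec_monomial k y)
     * iter_dderiv us chi (x - (1/2) *\<^sub>R y) * cnj (iter_dderiv ws chi (x + (1/2) *\<^sub>R y))"

lemma moment_kernel_Suc:
  "moment_kernel chi (k(j := Suc (k j))) us ws x y = of_real (y $ j) * moment_kernel chi k us ws x y"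
  unfolding moment_kernel_def vec_monomial_Suc by simp

type_synonym 'n moment_index = "('n \<Rightarrow> nat) \<times> (real^'n) list \<times> (real^'n) list"

definition moment_transform :: "(real^'n::finite \<Rightarrow> complex) \<Rightarrow> 'n moment_index \<Rightarrow> 'n phase \<Rightarrow> complex" where
  "moment_transform chi t g = (LINT y|lborel. exp (\<i> * of_real (snd g \<bullet> y))
     * moment_kernel chi (fst t) (fst (snd t)) (snd (snd t)) (fst g) y)"

definition moment_comb :: "(real^'n::finite \<Rightarrow> complex) \<Rightarrow> (complex \<times> 'n moment_index) list \<Rightarrow> 'n phase \<Rightarrow> complex" where
  "moment_comb chi L g = (\<Sum>(c, t)\<leftarrow>L. c * moment_transform chi t g)"

text \<open>The derivative of \<^const>\<open>moment_transform\<close> in direction \<open>v = (v\<^sub>x, v\<^sub>p)\<close>: the phase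
  contributes \<open>i v\<^sub>p\<^sub>,\<^sub>j\<close> times the moment raised in \<open>y\<^sub>j\<close>, the kernel a \<open>v\<^sub>x\<close>-derivative of either factor.\<close>

definition moment_dterms :: "'n::finite phase \<Rightarrow> 'n moment_index \<Rightarrow> (complex \<times> 'n moment_index) list" where
  "moment_dterms v t =
     map (\<lambda>j. (\<i> * of_real (snd v $ j), ((fst t)(j := Suc (fst t j)), fst (snd t), snd (snd t)))) idx_list
     @ [(1, (fst t, fst v # fst (snd t), snd (snd t))), (1, (fst t, fst (snd t), fst v # snd (snd t)))]"

definition moment_comb_dir :: "'n::finite phase \<Rightarrow> (complex \<times> 'n moment_index) list \<Rightarrow> (complex \<times> 'n moment_index) list" where
  "moment_comb_dir v L = concat (map (\<lambda>(c, t). map (\<lambda>(c', t'). (c * c', t')) (moment_dterms v t)) L)"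

context
  fixes chi :: "real^'n::finite \<Rightarrow> complex"
  assumes schwartz: "schwartz chi"
begin

lemma schwartz_differentiable: "iter_dderiv us chi differentiable (at z)"
  using schwartz unfolding schwartz_def by blast

lemma schwartz_continuous_on: "continuous_on UNIV (iter_dderiv us chi)"
  by (meson schwartz_differentiable continuous_at_imp_continuous_on differentiable_imp_continuous_within)

lemma schwartz_continuous_on_affine: "continuous_on UNIV (\<lambda>y. iter_dderiv us chi (x + c *\<^sub>R y))"
  by (rule continuous_on_compose2[OF schwartz_continuous_on]) (auto intro!: continuous_intros)

lemma schwartz_has_vector_derivative_line:
  "((\<lambda>t. iter_dderiv us chi (z + t *\<^sub>R w)) has_vector_derivative iter_dderiv (w # us) chi (z + s *\<^sub>R w)) (at s)"
  unfolding iter_dderiv_Cons by (rule has_vector_derivative_line_dderiv[OF schwartz_differentiable])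

lemma schwartz_weighted_bound: "\<exists>C. \<forall>z. (\<Prod>i\<in>UNIV. (1 + (z $ i)\<^sup>2) ^ N) * norm (iter_dderiv us chi z) \<le> C"
proof -
  have "\<forall>a. \<exists>C. \<forall>x. norm ((\<Prod>i\<in>UNIV. x $ i ^ a i) *\<^sub>R iter_dderiv us chi x) \<le> C"
    using schwartz unfolding schwartz_def bounded_iff by blast
  then obtain M where M: "\<And>a x. norm ((\<Prod>i\<in>UNIV. x $ i ^ a i) *\<^sub>R iter_dderiv us chi x) \<le> M a"
    by metis
  define A where "A = PiE (UNIV::'n set) (\<lambda>_. {..N})"
  show ?thesis
  proof (intro exI allI)
    fix z :: "real^'n"
    have "(\<Prod>i\<in>UNIV. (1 + (z $ i)\<^sup>2) ^ N) = (\<Prod>i\<in>UNIV. \<Sum>j\<le>N. real (N choose j) * ((z $ i)\<^sup>2) ^ j)"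
      by (intro prod.cong refl) (subst add.commute, subst binomial_ring, simp add: ac_simps)
    also have "\<dots> = (\<Sum>f\<in>A. \<Prod>i\<in>UNIV. real (N choose f i) * ((z $ i)\<^sup>2) ^ f i)"
      unfolding A_def by (rule prod_sum_PiE) auto
    finally have "(\<Prod>i\<in>UNIV. (1 + (z $ i)\<^sup>2) ^ N) * norm (iter_dderiv us chi z)
        = (\<Sum>f\<in>A. (\<Prod>i\<in>UNIV. real (N choose f i)) * norm ((\<Prod>i\<in>UNIV. z $ i ^ (2 * f i)) *\<^sub>R iter_dderiv us chi z))"
      by (simp add: sum_distrib_right prod.distrib power_mult prod_nonneg mult.assoc)
    also have "\<dots> \<le> (\<Sum>f\<in>A. (\<Prod>i\<in>UNIV. real (N choose f i)) * M (\<lambda>i. 2 * f i))"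
      by (intro sum_mono mult_left_mono M prod_nonneg) auto
    finally show "(\<Prod>i\<in>UNIV. (1 + (z $ i)\<^sup>2) ^ N) * norm (iter_dderiv us chi z)
        \<le> (\<Sum>f\<in>A. (\<Prod>i\<in>UNIV. real (N choose f i)) * M (\<lambda>i. 2 * f i))" .
  qed
qed

text \<open>Writing \<open>y = b - a\<close> with \<open>a = x - y/2\<close>, \<open>b = x + y/2\<close>, the decay of both factors at \<open>a\<close> and \<open>b\<close>
  pays for the monomial in \<open>y\<close> and for one extra factor \<open>1 + y\<^sub>i\<^sup>2\<close>, uniformly in \<open>x\<close>.\<close>

lemma moment_kernel_bound: "\<exists>C. \<forall>x y. norm (moment_kernel chi k us ws x y) \<le> C * cauchy_weight y"
proof -
  define N where "N = (\<Sum>i\<in>UNIV. k i) + 1"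
  have kN: "k i + 1 \<le> N" for i
    unfolding N_def using member_le_sum[of i UNIV k] by auto
  obtain C1 where C1: "\<And>z. (\<Prod>i\<in>UNIV. (1 + (z $ i)\<^sup>2) ^ N) * norm (iter_dderiv us chi z) \<le> C1"
    using schwartz_weighted_bound by blast
  obtain C2 where C2: "\<And>z. (\<Prod>i\<in>UNIV. (1 + (z $ i)\<^sup>2) ^ N) * norm (iter_dderiv ws chi z) \<le> C2"
    using schwartz_weighted_bound by blast
  have "0 \<le> C1" by (rule order_trans[OF _ C1[of 0]]) (auto intro!: prod_nonneg)
  show ?thesis
  proof (intro exI allI)
    fix x y :: "real^'n"
    define a where "a = x - (1/2) *\<^sub>R y"
    define b where "b = x + (1/2) *\<^sub>R y"
    define Q where "Q = (\<Prod>i\<in>UNIV. 1 + (y $ i)\<^sup>2)"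
    have "Q > 0" unfolding Q_def by (intro prod_pos) (simp add: add_pos_nonneg)
    have weight: "cauchy_weight y = inverse Q"
      unfolding cauchy_weight_def Q_def using prod_inversef[of "\<lambda>i. 1 + (y $ i)\<^sup>2" UNIV] by (simp add: comp_def)
    have "norm (moment_kernel chi k us ws x y) * Q
        = (\<Prod>i\<in>UNIV. \<bar>b $ i - a $ i\<bar> ^ k i * (1 + (b $ i - a $ i)\<^sup>2))
          * (norm (iter_dderiv us chi a) * norm (iter_dderiv ws chi b))"
      unfolding moment_kernel_def vec_monomial_def Q_def a_def b_def
      by (simp add: norm_mult prod_norm[symmetric] norm_power prod.distrib)
    also have "\<dots> \<le> (\<Prod>i\<in>UNIV. 2 ^ N * ((1 + (a $ i)\<^sup>2) ^ N * (1 + (b $ i)\<^sup>2) ^ N))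
          * (norm (iter_dderiv us chi a) * norm (iter_dderiv ws chi b))"
      by (intro mult_right_mono prod_mono conjI abs_power_mul_one_plus_square_le kN) auto
    also have "\<dots> = (2 ^ N) ^ CARD('n) * (((\<Prod>i\<in>UNIV. (1 + (a $ i)\<^sup>2) ^ N) * norm (iter_dderiv us chi a))
          * ((\<Prod>i\<in>UNIV. (1 + (b $ i)\<^sup>2) ^ N) * norm (iter_dderiv ws chi b)))"
      by (simp add: prod.distrib ac_simps)
    also have "\<dots> \<le> (2 ^ N) ^ CARD('n) * (C1 * C2)"
      using \<open>0 \<le> C1\<close> by (intro mult_left_mono mult_mono C1 C2) (auto intro!: prod_nonneg mult_nonneg_nonneg)
    finally show "norm (moment_kernel chi k us ws x y) \<le> ((2 ^ N) ^ CARD('n) * (C1 * C2)) * cauchy_weight y"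
      unfolding weight using \<open>Q > 0\<close> by (simp add: field_simps)
  qed
qed

lemma continuous_on_moment_kernel: "continuous_on UNIV (moment_kernel chi k us ws x)"
proof -
  have kernel: "moment_kernel chi k us ws x = (\<lambda>y. of_real (vec_monomial k y)
      * iter_dderiv us chi (x + (-1/2) *\<^sub>R y) * cnj (iter_dderiv ws chi (x + (1/2) *\<^sub>R y)))"
    unfolding moment_kernel_def by (simp add: algebra_simps)
  show ?thesis unfolding kernel
    by (intro continuous_intros schwartz_continuous_on_affine continuous_on_of_real continuous_on_vec_monomial)
qed

lemma moment_kernel_measurable [measurable]: "moment_kernel chi k us ws x \<in> borel_measurable borel"
  by (rule borel_measurable_continuous_onI[OF continuous_on_moment_kernel])

lemma integrable_moment_kernel:
  "integrable lborel (\<lambda>y. exp (\<i> * of_real (p \<bullet> y)) * moment_kernel chi k us ws x y)"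
proof -
  obtain C where C: "\<And>x y. norm (moment_kernel chi k us ws x y) \<le> C * cauchy_weight y"
    using moment_kernel_bound by blast
  show ?thesis
  proof (rule Bochner_Integration.integrable_bound[where f="\<lambda>y. C * cauchy_weight y"])
    show "AE y in lborel. norm (exp (\<i> * of_real (p \<bullet> y)) * moment_kernel chi k us ws x y) \<le> norm (C * cauchy_weight y)"
      using C by (auto intro!: AE_I2 order_trans[OF _ abs_ge_self] simp: norm_mult)
  qed (auto intro: integrable_mult_right integrable_cauchy_weight)
qed

lemma has_vector_derivative_moment_kernel:
  "((\<lambda>s. moment_kernel chi k us ws (x + s *\<^sub>R w) y) has_vector_derivative
     (moment_kernel chi k (w # us) ws (x + s *\<^sub>R w) y + moment_kernel chi k us (w # ws) (x + s *\<^sub>R w) y)) (at s)"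
proof -
  define c :: complex where "c = of_real (vec_monomial k y)"
  define a where "a = x - (1/2) *\<^sub>R y"
  define b where "b = x + (1/2) *\<^sub>R y"
  have kernel: "moment_kernel chi k us' ws' (x + s *\<^sub>R w) y
      = c * iter_dderiv us' chi (a + s *\<^sub>R w) * cnj (iter_dderiv ws' chi (b + s *\<^sub>R w))" for us' ws' s
    unfolding moment_kernel_def c_def a_def b_def by (simp add: algebra_simps)
  have "((\<lambda>s. c * iter_dderiv us chi (a + s *\<^sub>R w) * cnj (iter_dderiv ws chi (b + s *\<^sub>R w))) has_vector_derivative
      c * iter_dderiv us chi (a + s *\<^sub>R w) * cnj (iter_dderiv (w # ws) chi (b + s *\<^sub>R w))
      + c * iter_dderiv (w # us) chi (a + s *\<^sub>R w) * cnj (iter_dderiv ws chi (b + s *\<^sub>R w))) (at s)"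
    by (intro has_vector_derivative_mult has_vector_derivative_mult_right has_vector_derivative_cnj
        schwartz_has_vector_derivative_line)
  then show ?thesis unfolding kernel by (simp add: algebra_simps)
qed

lemma has_vector_derivative_moment_integrand:
  "((\<lambda>s. exp (\<i> * of_real (p \<bullet> y + s * (q \<bullet> y))) * moment_kernel chi k us ws (x + s *\<^sub>R w) y)
     has_vector_derivative exp (\<i> * of_real (p \<bullet> y + s * (q \<bullet> y)))
       * ((\<i> * of_real (q \<bullet> y)) * moment_kernel chi k us ws (x + s *\<^sub>R w) y
          + moment_kernel chi k (w # us) ws (x + s *\<^sub>R w) y + moment_kernel chi k us (w # ws) (x + s *\<^sub>R w) y)) (at s)"
proof -
  have "((\<lambda>s. exp (\<i> * of_real (p \<bullet> y + s * (q \<bullet> y))) * moment_kernel chi k us ws (x + s *\<^sub>R w) y)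
     has_vector_derivative exp (\<i> * of_real (p \<bullet> y + s * (q \<bullet> y)))
       * (moment_kernel chi k (w # us) ws (x + s *\<^sub>R w) y + moment_kernel chi k us (w # ws) (x + s *\<^sub>R w) y)
       + (\<i> * of_real (q \<bullet> y)) * exp (\<i> * of_real (p \<bullet> y + s * (q \<bullet> y))) * moment_kernel chi k us ws (x + s *\<^sub>R w) y) (at s)"
    by (intro has_vector_derivative_mult has_vector_derivative_exp_i_line has_vector_derivative_moment_kernel)
  then show ?thesis by (simp add: algebra_simps)
qed

lemma moment_kernel_inner:
  "of_real (q \<bullet> y) * moment_kernel chi k us ws x y = (\<Sum>j\<in>UNIV. of_real (q $ j) * moment_kernel chi (k(j := Suc (k j))) us ws x y)"
  unfolding moment_kernel_Suc inner_vec_def of_real_sum sum_distrib_right by (simp add: mult.assoc)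

lemma moment_derivative_bound:
  "\<exists>K. \<forall>x y. norm ((\<i> * of_real (q \<bullet> y)) * moment_kernel chi k us ws x y
      + moment_kernel chi k (w # us) ws x y + moment_kernel chi k us (w # ws) x y) \<le> K * cauchy_weight y"
proof -
  have "\<forall>j. \<exists>C. \<forall>x y. norm (moment_kernel chi (k(j := Suc (k j))) us ws x y) \<le> C * cauchy_weight y"
    using moment_kernel_bound by blast
  then obtain C where C: "\<And>j x y. norm (moment_kernel chi (k(j := Suc (k j))) us ws x y) \<le> C j * cauchy_weight y"
    by metis
  obtain C1 where C1: "\<And>x y. norm (moment_kernel chi k (w # us) ws x y) \<le> C1 * cauchy_weight y"
    using moment_kernel_bound by blast
  obtain C2 where C2: "\<And>x y. norm (moment_kernel chi k us (w # ws) x y) \<le> C2 * cauchy_weight y"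
    using moment_kernel_bound by blast
  show ?thesis
  proof (intro exI allI)
    fix x y
    have "norm ((\<i> * of_real (q \<bullet> y)) * moment_kernel chi k us ws x y)
        = norm (\<Sum>j\<in>UNIV. of_real (q $ j) * moment_kernel chi (k(j := Suc (k j))) us ws x y)"
      unfolding moment_kernel_inner[symmetric] by (simp add: norm_mult)
    also have "\<dots> \<le> (\<Sum>j\<in>UNIV. \<bar>q $ j\<bar> * C j) * cauchy_weight y"
      unfolding sum_distrib_right
      by (rule order_trans[OF norm_sum sum_mono]) (simp add: norm_mult C mult_left_mono mult.assoc)
    finally show "norm ((\<i> * of_real (q \<bullet> y)) * moment_kernel chi k us ws x y
        + moment_kernel chi k (w # us) ws x y + moment_kernel chi k us (w # ws) x y)
      \<le> ((\<Sum>j\<in>UNIV. \<bar>q $ j\<bar> * C j) + C1 + C2) * cauchy_weight y"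
      using C1[of x y] C2[of x y] norm_triangle_ineq[of "(\<i> * of_real (q \<bullet> y)) * moment_kernel chi k us ws x y
          + moment_kernel chi k (w # us) ws x y" "moment_kernel chi k us (w # ws) x y"]
        norm_triangle_ineq[of "(\<i> * of_real (q \<bullet> y)) * moment_kernel chi k us ws x y" "moment_kernel chi k (w # us) ws x y"]
      by (simp add: distrib_right)
  qed
qed

lemma has_vector_derivative_moment_transform:
  "((\<lambda>s. moment_transform chi t (g + s *\<^sub>R v)) has_vector_derivative moment_comb chi (moment_dterms v t) g) (at 0)"
proof -
  obtain k us ws where t: "t = (k, us, ws)" by (cases t) auto
  obtain x p where g: "g = (x, p)" by (cases g)
  obtain w q where v: "v = (w, q)" by (cases v)
  define f where "f s y = exp (\<i> * of_real (p \<bullet> y + s * (q \<bullet> y))) * moment_kernel chi k us ws (x + s *\<^sub>R w) y" for s y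
  define f' where "f' s y = exp (\<i> * of_real (p \<bullet> y + s * (q \<bullet> y)))
    * ((\<i> * of_real (q \<bullet> y)) * moment_kernel chi k us ws (x + s *\<^sub>R w) y
       + moment_kernel chi k (w # us) ws (x + s *\<^sub>R w) y + moment_kernel chi k us (w # ws) (x + s *\<^sub>R w) y)" for s y
  define E where "E t' y = exp (\<i> * of_real (p \<bullet> y)) * moment_kernel chi (fst t') (fst (snd t')) (snd (snd t')) x y" for t' y
  have transform: "moment_transform chi t' g = (\<integral>y. E t' y \<partial>lborel)" for t'
    unfolding moment_transform_def E_def g by simp
  obtain K where K: "\<And>x y. norm ((\<i> * of_real (q \<bullet> y)) * moment_kernel chi k us ws x y
      + moment_kernel chi k (w # us) ws x y + moment_kernel chi k us (w # ws) x y) \<le> K * cauchy_weight y"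
    using moment_derivative_bound by blast
  have "((\<lambda>s. \<integral>y. f s y \<partial>lborel) has_vector_derivative (\<integral>y. f' 0 y \<partial>lborel)) (at 0)"
  proof (rule has_vector_derivative_integral_at_0[where B="\<lambda>y. K * cauchy_weight y"])
    show "((\<lambda>s. f s y) has_vector_derivative f' s y) (at s)" for s y
      unfolding f_def f'_def by (rule has_vector_derivative_moment_integrand)
    show "integrable lborel (f 0)"
      unfolding f_def using integrable_moment_kernel by simp
    show "norm (f' s y) \<le> K * cauchy_weight y" for s y
      unfolding f'_def norm_mult using K by simp
  qed (auto simp: f_def f'_def intro: integrable_mult_right integrable_cauchy_weight)
  moreover have "moment_transform chi t (g + s *\<^sub>R v) = (\<integral>y. f s y \<partial>lborel)" for s
    unfolding moment_transform_def f_def t g v by (simp add: inner_add_left)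
  moreover have "f' 0 y = (\<Sum>j\<in>UNIV. (\<i> * of_real (q $ j)) * E (k(j := Suc (k j)), us, ws) y)
      + E (k, w # us, ws) y + E (k, us, w # ws) y" for y
    unfolding f'_def E_def mult.assoc[of \<i>] moment_kernel_inner
    by (simp add: sum_distrib_left algebra_simps)
  moreover have "integrable lborel (E t')" for t'
    unfolding E_def by (rule integrable_moment_kernel)
  ultimately show ?thesis
    unfolding moment_comb_def moment_dterms_def t v
    by (simp add: transform comp_def sum_list_map_idx_list integral_sum add.assoc)
qed

lemma has_vector_derivative_moment_comb:
  "((\<lambda>s. moment_comb chi L (g + s *\<^sub>R v)) has_vector_derivative moment_comb chi (moment_comb_dir v L) g) (at 0)"
proof (induction L)
  case Nil
  then show ?case by (simp add: moment_comb_def moment_comb_dir_def)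
next
  case (Cons ct L)
  obtain c t where ct: "ct = (c, t)" by (cases ct)
  have "moment_comb chi (moment_comb_dir v (ct # L)) g
      = c * moment_comb chi (moment_dterms v t) g + moment_comb chi (moment_comb_dir v L) g"
    unfolding ct moment_comb_def moment_comb_dir_def
    by (simp add: comp_def split_def sum_list_const_mult mult.assoc)
  then show ?case unfolding ct
    by (simp add: moment_comb_def, intro has_vector_derivative_add has_vector_derivative_mult_right
        has_vector_derivative_moment_transform[unfolded moment_comb_def] Cons.IH[unfolded moment_comb_def])
qed

lemma iter_dderiv_moment_comb: "iter_dderiv ws (moment_comb chi L) = moment_comb chi (foldr moment_comb_dir ws L)"
proof (induction ws)
  case (Cons v ws)
  have "dderiv v (moment_comb chi L') = moment_comb chi (moment_comb_dir v L')" for L'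
    by (intro ext) (simp add: dderiv_def vector_derivative_at[OF has_vector_derivative_moment_comb])
  then show ?case by (simp add: iter_dderiv_Cons Cons.IH)
qed simp

lemma line_smooth_wigner: "line_smooth (wigner (rank_one chi chi))"
  unfolding line_smooth_def
proof (intro allI)
  fix ws g v
  have "wigner (rank_one chi chi) = moment_comb chi [(of_real (1 / (2 * pi) ^ CARD('n)), ((\<lambda>_. 0), [], []))]"
    by (intro ext) (simp add: wigner_def moment_comb_def moment_transform_def moment_kernel_def
        vec_monomial_def rank_one_def)
  then show "(\<lambda>t. iter_dderiv ws (wigner (rank_one chi chi)) (g + t *\<^sub>R v)) differentiable at 0"
    by (simp only: iter_dderiv_moment_comb) (rule differentiableI_vector[OF has_vector_derivative_moment_comb])
qed

lemma wigner_rank_one_Dtrans: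
  "wigner (rank_one (Dtrans \<alpha> chi) (Dtrans \<beta> chi))
    = (\<lambda>g. plane_wave (dtrans_wave \<alpha> \<beta>) (dtrans_phase \<alpha> \<beta>) g * wigner (rank_one chi chi) (g - (1/2) *\<^sub>R (\<alpha> + \<beta>)))"
proof
  fix g :: "'n phase"
  define \<delta> where "\<delta> = fst \<beta> - fst \<alpha>"
  define m where "m = g - (1/2) *\<^sub>R (\<alpha> + \<beta>)"
  define f where "f y = exp (\<i> * of_real (snd g \<bullet> y))
    * rank_one (Dtrans \<alpha> chi) (Dtrans \<beta> chi) (fst g - (1/2) *\<^sub>R y) (fst g + (1/2) *\<^sub>R y)" for y
  have "continuous_on UNIV f"
  proof -
    have "f = (\<lambda>y. exp (\<i> * of_real (snd g \<bullet> y)) *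
       (exp (\<i> * of_real ((fst g - (1/2) *\<^sub>R y - (1/2) *\<^sub>R fst \<alpha>) \<bullet> snd \<alpha>))
          * iter_dderiv [] chi ((fst g - fst \<alpha>) + (-1/2) *\<^sub>R y) *
        cnj (exp (\<i> * of_real ((fst g + (1/2) *\<^sub>R y - (1/2) *\<^sub>R fst \<beta>) \<bullet> snd \<beta>))
          * iter_dderiv [] chi ((fst g - fst \<beta>) + (1/2) *\<^sub>R y))))"
      unfolding f_def rank_one_def Dtrans_def by (intro ext) (simp add: algebra_simps)
    then show ?thesis by (simp only:) (intro continuous_intros schwartz_continuous_on_affine)
  qed
  then have [measurable]: "f \<in> borel_measurable borel" by (rule borel_measurable_continuous_onI)
  have "(\<integral>y. f y \<partial>lborel) = (\<integral>z. f (\<delta> + z) \<partial>lborel)"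
    by (subst lborel_distr_plus[symmetric, of \<delta>]) (rule integral_distr; simp)
  also have "\<dots> = plane_wave (dtrans_wave \<alpha> \<beta>) (dtrans_phase \<alpha> \<beta>) g
      * (\<integral>z. exp (\<i> * of_real (snd m \<bullet> z)) * rank_one chi chi (fst m - (1/2) *\<^sub>R z) (fst m + (1/2) *\<^sub>R z) \<partial>lborel)"
    unfolding f_def \<delta>_def m_def rank_one_Dtrans_integrand_shift by simp
  finally show "wigner (rank_one (Dtrans \<alpha> chi) (Dtrans \<beta> chi)) g
      = plane_wave (dtrans_wave \<alpha> \<beta>) (dtrans_phase \<alpha> \<beta>) g * wigner (rank_one chi chi) (g - (1/2) *\<^sub>R (\<alpha> + \<beta>))"
    unfolding wigner_def f_def m_def by simp
qed

end

theorem lemma12: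
  fixes chi :: "real^'n::finite \<Rightarrow> complex"
  assumes "schwartz chi"
    and "(LINT x|lborel. (cmod (chi x))\<^sup>2) = 1"
  shows "\<forall>(\<alpha>::'n phase) (\<beta>::'n phase) (a::'n midx) (b::'n midx).
    seminorm (wigner (rank_one (Dtrans \<alpha> chi) (Dtrans \<beta> chi))) a b
      \<le> (\<Sum>c\<in>{c. mi_le c b}. \<Sum>d\<in>{d. mi_le d a}. \<Sum>e\<in>{e. mi_le e c}. \<Sum>f\<in>{f. mi_le f d}.
           of_nat (mi_binom b c * mi_binom a d * mi_binom c e * mi_binom d f)
           * ennreal (1 / 2 ^ mi_abs d)
           * seminorm (wigner (rank_one chi chi)) (mi_sub a d) (mi_sub b c)
           * ennreal \<bar>mi_pow \<alpha> (mi_add (mi_hat e) f)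
                     * mi_pow \<beta> (mi_add (mi_sub (mi_hat c) (mi_hat e)) (mi_sub d f))\<bar>)
    \<and> seminorm (wigner (rank_one (Dtrans \<alpha> chi) (Dtrans \<beta> chi))) a b
      \<le> ennreal (4 ^ (mi_abs a + mi_abs b) * (1 + norm \<alpha> + norm \<beta>) ^ (mi_abs a + mi_abs b))
         * seminorm_sum (wigner (rank_one chi chi)) a b"
proof -
  let ?W = "wigner (rank_one chi chi)"
  have "seminorm (wigner (rank_one (Dtrans \<alpha> chi) (Dtrans \<beta> chi))) a b
      \<le> (\<Sum>c\<in>{c. mi_le c b}. \<Sum>d\<in>{d. mi_le d a}.
          ennreal (\<Sum>e\<in>{e. mi_le e c}. \<Sum>f\<in>{f. mi_le f d}. dtrans_coeff \<alpha> \<beta> a b c d e f)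
          * seminorm ?W (mi_sub a d) (mi_sub b c))" for \<alpha> \<beta> :: "'n phase" and a b :: "'n midx"
    unfolding wigner_rank_one_Dtrans[OF assms(1)]
    by (rule seminorm_dtrans_le[OF line_smooth_wigner[OF assms(1)]])
  with sum_dtrans_seminorm_le show ?thesis
    unfolding sum_dtrans_ennreal_eq by (blast intro: order_trans)
qed

end
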